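(* Let $A(q):=\sum_{k=1}^{\infty} \frac{q^{k} (q;q^2)_{k}}{(-q;q^2)_k (1+q^{2k})}$, viewed as a formal power series in $q$. Then, coefficientwise, $$\frac{1}{2}\big(A(q)-A(-q)\big)\equiv q\frac{(q^8;q^8)_{\infty}^4}{(q^4;q^4)_{\infty}^2}\pmod{4}.$$
   Context: $(a;q)_n=\prod_{j=0}^{n-1}(1-aq^j)$, $(a;q)_\infty=\prod_{j\ge0}(1-aq^j)$. *)

theory Defs
  imports "HOL-Computational_Algebra.Formal_Power_Series" "HOL-Number_Theory.Cong"
begin

definition fqpoch :: "rat fps \<Rightarrow> rat fps \<Rightarrow> nat \<Rightarrow> rat fps" where
  "fqpoch a b n = (\<Prod>j<n. 1 - a * b ^ j)"

text \<open>(q^m;q^m)_infinity for m >= 1, as a formal power series: its n-th coefficient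
  equals that of the finite product over j = 1..n (the remaining factors are 1 mod q^(n+1)).\<close>
definition qpinf :: "nat \<Rightarrow> rat fps" where
  "qpinf m = Abs_fps (\<lambda>n. fps_nth (\<Prod>j\<in>{1..n}. 1 - fps_X ^ (m * j)) n)"

definition Aterm :: "nat \<Rightarrow> rat fps" where
  "Aterm k = fps_X ^ k * fqpoch fps_X (fps_X ^ 2) k
     / (fqpoch (- fps_X) (fps_X ^ 2) k * (1 + fps_X ^ (2 * k)))"

text \<open>A(q) = sum_{k>=1} Aterm k; the k-th summand has order >= k, so the n-th
  coefficient of the series is the finite sum over k = 1..n.\<close>
definition Aser :: "rat fps" where
  "Aser = Abs_fps (\<lambda>n. \<Sum>k\<in>{1..n}. fps_nth (Aterm k) n)"

end

theory Submission
  imports Defs "HOL-Number_Theory.Cong"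
begin

text \<open>Write $r_j = (q;q^2)_j/(-q;q^2)_j$. Since $r_{j+1} - r_j = -2 r_j q^{2j+1}/(1+q^{2j+1})$,
  the $k$-th summand of $A(q)$ is $q^k/(1+q^{2k})$ minus twice a series that is congruent modulo 2
  to $\frac{q^k}{1-q^{2k}}\sum_{j<k}\frac{q^{2j+1}}{1-q^{2j+1}}$. For odd $n$ the $n$-th coefficients
  of the latter, summed over $k$, count the solutions of $km + dt = n$ with $m, d$ odd and
  $d < 2k$, and an explicit bijection shows that this number is even. The first parts contribute
  $\sum_{d \mid n} (-1)^{(n/d - 1)/2} \equiv \sigma(n) \pmod 4$, so the odd part of $A$ has
  coefficients $\equiv \sigma(n) \pmod 4$.

  On the other side, Gauss's identity $(q^8;q^8)_\infty^2 = \psi(q^4)\,(q^4;q^4)_\infty$, obtained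
  from a finite form of the Jacobi triple product, turns the right-hand side into $q\,\psi(q^4)^2$,
  whose $n$-th coefficient is the number of representations $2n = u^2 + v^2$ with $u, v$ odd
  and positive. For odd $n$ this number is $\equiv \sigma(n) \pmod 4$: the pairs $u < v$ correspond
  to the solutions of $x^2 + 4y^2 = n$, whose parity Zagier's involution relates to the number of
  divisors below $\sqrt n$. For even $n$ both coefficients vanish.\<close>

section \<open>Gaussian binomials and the finite Jacobi triple product\<close>

definition qpoch :: "'a::comm_ring_1 \<Rightarrow> nat \<Rightarrow> 'a" where
  "qpoch q n = (\<Prod>j<n. 1 - q ^ Suc j)"

fun qbinom :: "'a::comm_ring_1 \<Rightarrow> nat \<Rightarrow> nat \<Rightarrow> 'a" where
  "qbinom q n 0 = 1"
| "qbinom q 0 (Suc k) = 0"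
| "qbinom q (Suc n) (Suc k) = qbinom q n k + q ^ Suc k * qbinom q n (Suc k)"

lemma qpoch_Suc: "qpoch q (Suc n) = qpoch q n * (1 - q ^ Suc n)"
  by (simp add: qpoch_def)

lemma qpoch_0[simp]: "qpoch q 0 = 1" by (simp add: qpoch_def)

lemma qbinom_eq_0: "n < k \<Longrightarrow> qbinom q n k = 0"
proof (induction n arbitrary: k)
  case 0 then show ?case by (cases k) auto
next
  case (Suc n) then show ?case by (cases k) auto
qed

lemma qbinom_self[simp]: "qbinom q n n = 1"
  by (induction n) (auto simp: qbinom_eq_0)

lemma qbinom_qpoch: "k \<le> n \<Longrightarrow> qbinom q n k * qpoch q k * qpoch q (n - k) = qpoch q n"
proof (induction n arbitrary: k)
  case 0 then show ?case by simp
next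
  case (Suc n)
  show ?case
  proof (cases k)
    case 0 then show ?thesis by simp
  next
    case (Suc k')
    show ?thesis
    proof (cases "k' = n")
      case True then show ?thesis using Suc by simp
    next
      case False
      with Suc \<open>k \<le> Suc n\<close> have kn: "Suc k' \<le> n" by simp
      have e1: "Suc n - k = Suc (n - Suc k')" using kn Suc by simp
      have IH1: "qbinom q n k' * qpoch q k' * qpoch q (n - k') = qpoch q n" using Suc.IH kn by simp
      have IH2: "qbinom q n (Suc k') * qpoch q (Suc k') * qpoch q (n - Suc k') = qpoch q n" using Suc.IH kn by simp
      have nk: "n - k' = Suc (n - Suc k')" using kn by simp
      have "qbinom q (Suc n) k * qpoch q k * qpoch q (Suc n - k)
          = qbinom q n k' * qpoch q (Suc k') * qpoch q (Suc (n - Suc k'))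
            + q ^ Suc k' * (qbinom q n (Suc k') * qpoch q (Suc k') * qpoch q (Suc (n - Suc k')))"
        using Suc e1 by (simp add: algebra_simps)
      also have "qbinom q n k' * qpoch q (Suc k') * qpoch q (Suc (n - Suc k'))
          = (qbinom q n k' * qpoch q k' * qpoch q (n - k')) * (1 - q ^ Suc k')"
        using nk by (simp add: qpoch_Suc algebra_simps)
      also have "qbinom q n (Suc k') * qpoch q (Suc k') * qpoch q (Suc (n - Suc k'))
          = (qbinom q n (Suc k') * qpoch q (Suc k') * qpoch q (n - Suc k')) * (1 - q ^ (n - k'))"
        using nk by (simp add: qpoch_Suc algebra_simps)
      finally have "qbinom q (Suc n) k * qpoch q k * qpoch q (Suc n - k)
          = qpoch q n * (1 - q ^ Suc k') + q ^ Suc k' * (qpoch q n * (1 - q ^ (n - k')))"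
        using IH1 IH2 by simp
      also have "\<dots> = qpoch q n * (1 - q ^ (Suc k' + (n - k')))"
        by (simp add: algebra_simps power_add)
      also have "Suc k' + (n - k') = Suc n" using kn by simp
      finally show ?thesis by (simp add: qpoch_Suc)
    qed
  qed
qed

lemma qbinom_Suc_Suc_dual:
  fixes q :: "'a::idom"
  assumes nz: "\<And>j. qpoch q j \<noteq> 0"
  shows "qbinom q (Suc n) (Suc k) = q ^ (n - k) * qbinom q n k + qbinom q n (Suc k)"
proof (cases "k \<le> n")
  case False then show ?thesis by (simp add: qbinom_eq_0)
next
  case True
  show ?thesis
  proof (cases "k = n")
    case True then show ?thesis by (simp add: qbinom_eq_0)
  next
    case False
    with True have kn: "Suc k \<le> n" by simp
    have nk: "n - k = Suc (n - Suc k)" using kn by simp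
    have A: "qbinom q (Suc n) (Suc k) * (qpoch q (Suc k) * qpoch q (n - k)) = qpoch q (Suc n)"
      using qbinom_qpoch[of "Suc k" "Suc n" q] kn by (simp add: mult.assoc)
    have B1: "qbinom q n k * (qpoch q (Suc k) * qpoch q (n - k)) = qpoch q n * (1 - q ^ Suc k)"
      using qbinom_qpoch[of k n q] kn by (simp add: qpoch_Suc algebra_simps)
    have P2: "qpoch q (n - k) = qpoch q (n - Suc k) * (1 - q ^ (n - k))"
      using nk qpoch_Suc by metis
    have B2: "qbinom q n (Suc k) * (qpoch q (Suc k) * qpoch q (n - k)) = qpoch q n * (1 - q ^ (n - k))"
      using qbinom_qpoch[of "Suc k" n q] kn unfolding P2 by (simp add: algebra_simps)
    have "(q ^ (n - k) * qbinom q n k + qbinom q n (Suc k)) * (qpoch q (Suc k) * qpoch q (n - k))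
         = q ^ (n - k) * (qbinom q n k * (qpoch q (Suc k) * qpoch q (n - k)))
           + qbinom q n (Suc k) * (qpoch q (Suc k) * qpoch q (n - k))"
      by (simp add: algebra_simps)
    also have "\<dots> = q ^ (n - k) * (qpoch q n * (1 - q ^ Suc k)) + qpoch q n * (1 - q ^ (n - k))"
      by (simp only: B1 B2)
    also have "\<dots> = qpoch q n * (1 - q ^ (n - k + Suc k))"
      by (simp add: algebra_simps power_add)
    also have "n - k + Suc k = Suc n" using kn by simp
    finally have C: "(q ^ (n - k) * qbinom q n k + qbinom q n (Suc k)) * (qpoch q (Suc k) * qpoch q (n - k))
        = qpoch q (Suc n)"
      by (simp add: qpoch_Suc)
    have "qpoch q (Suc k) * qpoch q (n - k) \<noteq> 0" using nz by simp
    with A C show ?thesis by (metis mult_right_cancel)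
  qed
qed

lemma qbinom_Suc_Suc_Suc:
  fixes q :: "'a::idom"
  assumes nz: "\<And>j. qpoch q j \<noteq> 0"
  shows "qbinom q (Suc (Suc M)) i = q ^ i * qbinom q M i
     + (1 + q ^ Suc M) * (if 1 \<le> i then qbinom q M (i - 1) else 0)
     + (if 2 \<le> i then q ^ (M + 2 - i) * qbinom q M (i - 2) else 0)"
proof (cases i)
  case 0 then show ?thesis by simp
next
  case (Suc j)
  show ?thesis
  proof (cases j)
    case 0
    have "qbinom q (Suc (Suc M)) (Suc 0) = 1 + q * (q ^ M * qbinom q M 0 + qbinom q M (Suc 0))"
      using qbinom_Suc_Suc_dual[OF nz, of M 0] by simp
    then show ?thesis using Suc 0 by (simp add: algebra_simps)
  next
    case (Suc k)
    have a: "qbinom q (Suc M) (Suc k) = q ^ (M - k) * qbinom q M k + qbinom q M (Suc k)"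
      using qbinom_Suc_Suc_dual[OF nz] by blast
    have b: "qbinom q (Suc M) (Suc (Suc k)) = q ^ (M - Suc k) * qbinom q M (Suc k) + qbinom q M (Suc (Suc k))"
      using qbinom_Suc_Suc_dual[OF nz] by blast
    have c: "q ^ Suc (Suc k) * (q ^ (M - Suc k) * qbinom q M (Suc k)) = q ^ Suc M * qbinom q M (Suc k)"
    proof (cases "Suc k \<le> M")
      case True
      then have "Suc (Suc k) + (M - Suc k) = Suc M" by simp
      then show ?thesis by (metis mult.assoc power_add)
    next
      case False then show ?thesis by (simp add: qbinom_eq_0)
    qed
    have "qbinom q (Suc (Suc M)) i = qbinom q (Suc M) (Suc k) + q ^ Suc (Suc k) * qbinom q (Suc M) (Suc (Suc k))"
      using \<open>i = Suc j\<close> Suc by simp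
    also have "\<dots> = q ^ (M - k) * qbinom q M k + qbinom q M (Suc k)
        + (q ^ Suc (Suc k) * (q ^ (M - Suc k) * qbinom q M (Suc k)) + q ^ Suc (Suc k) * qbinom q M (Suc (Suc k)))"
      unfolding a b by (simp add: algebra_simps)
    also have "\<dots> = q ^ (M - k) * qbinom q M k + qbinom q M (Suc k)
        + (q ^ Suc M * qbinom q M (Suc k) + q ^ Suc (Suc k) * qbinom q M (Suc (Suc k)))"
      unfolding c ..
    finally show ?thesis using \<open>i = Suc j\<close> Suc by (simp add: algebra_simps)
  qed
qed

fun tri :: "nat \<Rightarrow> nat" where
  "tri 0 = 0"
| "tri (Suc k) = tri k + Suc k"

text \<open>\<open>jtp_exp N i\<close> is $\binom{i - N + 1}{2}$, the exponent in the finite Jacobi triple product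
  $\sum_{i=0}^{2N} q^{\binom{i-N+1}{2}} \binom{2N}{i}_q = \prod_{j<N} (1 + q^{j+1})(1 + q^j)$.\<close>

definition jtp_exp :: "nat \<Rightarrow> nat \<Rightarrow> nat" where
  "jtp_exp N i = (if N \<le> i then tri (i - N) else tri (N - i - 1))"

lemma jtp_exp_Suc: "i + jtp_exp (Suc N) i = N + jtp_exp N i"
proof -
  consider "Suc N \<le> i" | "i = N" | "i < N" by linarith
  then show ?thesis
  proof cases
    case 1
    then have "i - N = Suc (i - Suc N)" by simp
    then show ?thesis using 1 by (simp add: jtp_exp_def)
  next
    case 2 then show ?thesis by (simp add: jtp_exp_def)
  next
    case 3
    then have "N - i = Suc (N - i - 1)" by simp
    then have "tri (N - i) = tri (N - i - 1) + (N - i)" by (metis tri.simps(2))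
    then show ?thesis using 3 by (simp add: jtp_exp_def)
  qed
qed

lemma jtp_exp_Suc_shift1: "1 \<le> i \<Longrightarrow> jtp_exp (Suc N) i = jtp_exp N (i - 1)"
  by (auto simp: jtp_exp_def)

lemma jtp_exp_Suc_shift2:
  "2 \<le> i \<Longrightarrow> i \<le> 2 * N + 2
     \<Longrightarrow> jtp_exp (Suc N) i + (2 * N + 2 - i) = Suc N + jtp_exp N (i - 2)"
proof -
  assume a: "2 \<le> i" "i \<le> 2 * N + 2"
  consider "N + 2 \<le> i" | "i = N + 1" | "i < N + 1" by linarith
  then show ?thesis
  proof cases
    case 1
    then have "i - Suc N = Suc (i - 2 - N)" by simp
    then have "tri (i - Suc N) = tri (i - 2 - N) + (i - Suc N)" by (metis tri.simps(2))
    then show ?thesis using 1 a by (simp add: jtp_exp_def)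
  next
    case 2 then show ?thesis using a by (simp add: jtp_exp_def)
  next
    case 3
    then have "N + 1 - i = Suc (N - i)" by simp
    then have "tri (N + 1 - i) = tri (N - i) + (N + 1 - i)" by simp
    moreover have "jtp_exp (Suc N) i = tri (N - i)" using 3 by (simp add: jtp_exp_def)
    moreover have "jtp_exp N (i - 2) = tri (N + 1 - i)" using 3 a by (simp add: jtp_exp_def)
    ultimately show ?thesis using 3 a by linarith
  qed
qed

definition jtp_term :: "'a::comm_ring_1 \<Rightarrow> nat \<Rightarrow> nat \<Rightarrow> 'a" where
  "jtp_term q N i = q ^ jtp_exp N i * qbinom q (2 * N) i"

lemma jtp_term_Suc:
  fixes q :: "'a::idom"
  assumes nz: "\<And>j. qpoch q j \<noteq> 0"
  shows "jtp_term q (Suc N) i = q ^ N * jtp_term q N i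
     + (1 + q ^ Suc (2 * N)) * (if 1 \<le> i then jtp_term q N (i - 1) else 0)
     + q ^ Suc N * (if 2 \<le> i then jtp_term q N (i - 2) else 0)"
proof -
  have g: "qbinom q (2 * Suc N) i = q ^ i * qbinom q (2 * N) i
     + (1 + q ^ Suc (2 * N)) * (if 1 \<le> i then qbinom q (2 * N) (i - 1) else 0)
     + (if 2 \<le> i then q ^ (2 * N + 2 - i) * qbinom q (2 * N) (i - 2) else 0)"
    using qbinom_Suc_Suc_Suc[OF nz, of "2 * N" i] by simp
  have t1: "q ^ jtp_exp (Suc N) i * (q ^ i * qbinom q (2 * N) i) = q ^ N * jtp_term q N i"
    unfolding jtp_term_def using jtp_exp_Suc[of i N] by (metis add.commute mult.assoc power_add)
  have t2: "q ^ jtp_exp (Suc N) i * ((1 + q ^ Suc (2 * N)) * (if 1 \<le> i then qbinom q (2 * N) (i - 1) else 0))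
      = (1 + q ^ Suc (2 * N)) * (if 1 \<le> i then jtp_term q N (i - 1) else 0)"
    unfolding jtp_term_def using jtp_exp_Suc_shift1[of i N] by (auto simp: algebra_simps)
  have t3: "q ^ jtp_exp (Suc N) i * (if 2 \<le> i then q ^ (2 * N + 2 - i) * qbinom q (2 * N) (i - 2) else 0)
      = q ^ Suc N * (if 2 \<le> i then jtp_term q N (i - 2) else 0)"
  proof (cases "2 \<le> i")
    case True
    show ?thesis
    proof (cases "i \<le> 2 * N + 2")
      case True
      with \<open>2 \<le> i\<close> have "jtp_exp (Suc N) i + (2 * N + 2 - i) = Suc N + jtp_exp N (i - 2)"
        by (rule jtp_exp_Suc_shift2)
      then have "q ^ jtp_exp (Suc N) i * q ^ (2 * N + 2 - i) = q ^ Suc N * q ^ jtp_exp N (i - 2)"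
        by (metis power_add)
      then show ?thesis using \<open>2 \<le> i\<close> unfolding jtp_term_def by (simp add: mult.assoc[symmetric])
    next
      case False then show ?thesis by (simp add: qbinom_eq_0 jtp_term_def)
    qed
  next
    case False then show ?thesis by simp
  qed
  have "jtp_term q (Suc N) i = q ^ jtp_exp (Suc N) i * qbinom q (2 * Suc N) i" by (simp add: jtp_term_def)
  also have "\<dots> = q ^ jtp_exp (Suc N) i * (q ^ i * qbinom q (2 * N) i)
     + q ^ jtp_exp (Suc N) i * ((1 + q ^ Suc (2 * N)) * (if 1 \<le> i then qbinom q (2 * N) (i - 1) else 0))
     + q ^ jtp_exp (Suc N) i * (if 2 \<le> i then q ^ (2 * N + 2 - i) * qbinom q (2 * N) (i - 2) else 0)"
    unfolding g by (simp add: algebra_simps)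
  finally show ?thesis unfolding t1 t2 t3 .
qed

lemma jtp_term_eq_0: "2 * N < i \<Longrightarrow> jtp_term q N i = 0"
  by (simp add: jtp_term_def qbinom_eq_0)

lemma sum_jtp_term_extend:
  "2 * N \<le> L \<Longrightarrow> (\<Sum>i\<le>L. jtp_term q N i) = (\<Sum>i\<le>2*N. jtp_term q N i)"
proof (induction L)
  case 0 then show ?case by simp
next
  case (Suc L)
  show ?case
  proof (cases "2 * N = Suc L")
    case True then show ?thesis by simp
  next
    case False
    then have "2 * N \<le> L" using Suc.prems by simp
    then show ?thesis using Suc.IH by (simp add: jtp_term_eq_0)
  qed
qed

lemma sum_shift_1: "(\<Sum>i\<le>Suc L. (if 1 \<le> i then f (i - 1) else 0)) = (\<Sum>i\<le>L. f i)"
  by (subst sum.atMost_Suc_shift) simp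

lemma sum_shift_2: "(\<Sum>i\<le>Suc (Suc L). (if 2 \<le> i then f (i - 2) else 0)) = (\<Sum>i\<le>L. f i)"
  by (subst sum.atMost_Suc_shift, subst sum.atMost_Suc_shift) simp

lemma finite_jacobi_triple_product:
  fixes q :: "'a::idom"
  assumes nz: "\<And>j. qpoch q j \<noteq> 0"
  shows "(\<Sum>i\<le>2*N. jtp_term q N i) = (\<Prod>j<N. (1 + q ^ Suc j) * (1 + q ^ j))"
proof (induction N)
  case 0 then show ?case by (simp add: jtp_term_def jtp_exp_def)
next
  case (Suc N)
  let ?S = "\<Sum>i\<le>2*N. jtp_term q N i"
  have "(\<Sum>i\<le>2 * Suc N. jtp_term q (Suc N) i)
     = q ^ N * (\<Sum>i\<le>Suc (Suc (2*N)). jtp_term q N i)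
       + (1 + q ^ Suc (2 * N)) * (\<Sum>i\<le>Suc (Suc (2*N)). (if 1 \<le> i then jtp_term q N (i - 1) else 0))
       + q ^ Suc N * (\<Sum>i\<le>Suc (Suc (2*N)). (if 2 \<le> i then jtp_term q N (i - 2) else 0))"
  proof -
    have e: "2 * Suc N = Suc (Suc (2*N))" by simp
    have "(\<Sum>i\<le>2 * Suc N. jtp_term q (Suc N) i) = (\<Sum>i\<le>Suc (Suc (2*N)). q ^ N * jtp_term q N i
       + (1 + q ^ Suc (2 * N)) * (if 1 \<le> i then jtp_term q N (i - 1) else 0)
       + q ^ Suc N * (if 2 \<le> i then jtp_term q N (i - 2) else 0))"
      unfolding e by (rule sum.cong[OF refl], rule jtp_term_Suc[OF nz])
    then show ?thesis by (simp only: sum.distrib sum_distrib_left)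
  qed
  also have "(\<Sum>i\<le>Suc (Suc (2*N)). jtp_term q N i) = ?S" by (rule sum_jtp_term_extend) simp
  also have "(\<Sum>i\<le>Suc (Suc (2*N)). (if 1 \<le> i then jtp_term q N (i - 1) else 0))
      = (\<Sum>i\<le>Suc (2*N). jtp_term q N i)"
    by (rule sum_shift_1)
  also have "(\<Sum>i\<le>Suc (2*N). jtp_term q N i) = ?S" by (rule sum_jtp_term_extend) simp
  also have "(\<Sum>i\<le>Suc (Suc (2*N)). (if 2 \<le> i then jtp_term q N (i - 2) else 0)) = ?S"
    by (rule sum_shift_2)
  finally have "(\<Sum>i\<le>2 * Suc N. jtp_term q (Suc N) i) = (q ^ N + (1 + q ^ Suc (2 * N)) + q ^ Suc N) * ?S"
    by (simp add: algebra_simps)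
  also have "q ^ N + (1 + q ^ Suc (2 * N)) + q ^ Suc N = (1 + q ^ Suc N) * (1 + q ^ N)"
  proof -
    have "q ^ Suc (2 * N) = q ^ Suc N * q ^ N" by (simp add: power_add[symmetric] mult_2)
    then show ?thesis by (simp add: algebra_simps)
  qed
  finally show ?case using Suc.IH by (simp add: mult.commute)
qed

section \<open>Gauss's identity $(q^{2m};q^{2m})_\infty^2 = \psi(q^m)\,(q^m;q^m)_\infty$\<close>

definition fps_eq_below :: "nat \<Rightarrow> 'a::comm_ring_1 fps \<Rightarrow> 'a fps \<Rightarrow> bool" where
  "fps_eq_below k f g \<longleftrightarrow> (\<forall>i<k. fps_nth f i = fps_nth g i)"

lemma fps_eq_below_refl[simp]: "fps_eq_below k f f" by (simp add: fps_eq_below_def)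
lemma fps_eq_below_sym: "fps_eq_below k f g \<Longrightarrow> fps_eq_below k g f" by (simp add: fps_eq_below_def)
lemma fps_eq_below_trans [trans]:
  "fps_eq_below k f g \<Longrightarrow> fps_eq_below k g h \<Longrightarrow> fps_eq_below k f h"
  by (simp add: fps_eq_below_def)

lemma fps_eq_below_add:
  "fps_eq_below k f f' \<Longrightarrow> fps_eq_below k g g' \<Longrightarrow> fps_eq_below k (f + g) (f' + g')"
  by (simp add: fps_eq_below_def)

lemma fps_eq_below_diff:
  "fps_eq_below k f f' \<Longrightarrow> fps_eq_below k g g' \<Longrightarrow> fps_eq_below k (f - g) (f' - g')"
  by (simp add: fps_eq_below_def)

lemma fps_eq_below_mult:
  "fps_eq_below k f f' \<Longrightarrow> fps_eq_below k g g' \<Longrightarrow> fps_eq_below k (f * g) (f' * g')"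
  unfolding fps_eq_below_def fps_mult_nth by (auto intro!: sum.cong)

lemma fps_eq_below_sum:
  "(\<And>j. j \<in> J \<Longrightarrow> fps_eq_below k (f j) (g j))
     \<Longrightarrow> fps_eq_below k (\<Sum>j\<in>J. f j) (\<Sum>j\<in>J. g j)"
  unfolding fps_eq_below_def by (simp add: fps_sum_nth)

lemma fps_eq_below_prod:
  "finite J \<Longrightarrow> (\<And>j. j \<in> J \<Longrightarrow> fps_eq_below k (f j) (g j))
     \<Longrightarrow> fps_eq_below k (\<Prod>j\<in>J. f j) (\<Prod>j\<in>J. g j)"
  by (induction J rule: finite_induct) (auto intro: fps_eq_below_mult)

lemma fps_eq_below_X_power_mult: "k \<le> e \<Longrightarrow> fps_eq_below k (fps_X ^ e * f) 0"
  unfolding fps_eq_below_def by (simp add: fps_X_power_mult_nth)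

lemma fps_eq_below_one_minus_X_power: "k \<le> e \<Longrightarrow> fps_eq_below k (1 - fps_X ^ e) 1"
  using fps_eq_below_diff[OF fps_eq_below_refl fps_eq_below_X_power_mult[of k e 1]] by simp

text \<open>\<open>psi_fps m\<close> is $\psi(q^m) = \sum_{a \ge 0} q^{m a (a+1)/2}$.\<close>

definition psi_fps :: "nat \<Rightarrow> rat fps" where
  "psi_fps m = Abs_fps (\<lambda>t. if \<exists>a. m * tri a = t then 1 else 0)"

lemma le_tri: "a \<le> tri a" by (induction a) auto

lemma tri_strict_mono: "a < b \<Longrightarrow> tri a < tri b"
proof (induction b)
  case 0 then show ?case by simp
next
  case (Suc b) then show ?case by (cases "a = b") auto
qed

lemma tri_inj: "tri a = tri b \<Longrightarrow> a = b"
  by (metis tri_strict_mono less_irrefl linorder_neqE_nat)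

lemma qpoch_X_power_nth_0: "fps_nth (qpoch (fps_X ^ m :: rat fps) n) 0 = (if 0 < m then 1 else 0 ^ n)"
  by (induction n) (auto simp: qpoch_Suc power_mult[symmetric] fps_mult_nth_0)

lemma qpoch_X_power_nonzero: "0 < m \<Longrightarrow> qpoch (fps_X ^ m :: rat fps) n \<noteq> 0"
  using qpoch_X_power_nth_0[of m n] by (metis one_neq_zero fps_zero_nth)

definition qpoch_tail :: "'a::comm_ring_1 \<Rightarrow> nat \<Rightarrow> nat \<Rightarrow> 'a" where
  "qpoch_tail q a b = (\<Prod>j<b. 1 - q ^ (a + Suc j))"

lemma qpoch_add: "qpoch q (a + b) = qpoch q a * qpoch_tail q a b"
  by (induction b) (auto simp: qpoch_tail_def qpoch_Suc algebra_simps)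

lemma qpoch_tail_eq_below:
  "k \<le> m * Suc a \<Longrightarrow> fps_eq_below k (qpoch_tail (fps_X ^ m :: rat fps) a b) 1"
proof -
  assume k: "k \<le> m * Suc a"
  have "fps_eq_below k (\<Prod>j<b. 1 - (fps_X ^ m :: rat fps) ^ (a + Suc j)) (\<Prod>j<b. 1)"
  proof (rule fps_eq_below_prod)
    fix j assume "j \<in> {..<b}"
    have kk: "k \<le> m * (a + Suc j)" using k by (simp add: mult_le_mono2 le_trans)
    have e: "(fps_X ^ m :: rat fps) ^ (a + Suc j) = fps_X ^ (m * (a + Suc j))"
      by (simp only: power_mult)
    show "fps_eq_below k (1 - (fps_X ^ m :: rat fps) ^ (a + Suc j)) 1"
      unfolding e by (rule fps_eq_below_one_minus_X_power[OF kk])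
  qed simp
  then show ?thesis by (simp add: qpoch_tail_def)
qed

lemma qbinom_qpoch_eq_below:
  assumes m: "0 < m" and i: "i \<le> n" and k1: "k \<le> m * Suc i" and k2: "k \<le> m * Suc (n - i)"
  shows "fps_eq_below k (qbinom (fps_X ^ m :: rat fps) n i * qpoch (fps_X ^ m) n) 1"
proof -
  let ?q = "fps_X ^ m :: rat fps"
  have s1: "qpoch ?q n = qpoch ?q i * qpoch_tail ?q i (n - i)" using qpoch_add[of ?q i "n - i"] i by simp
  have s2: "qpoch ?q n = qpoch ?q (n - i) * qpoch_tail ?q (n - i) i" using qpoch_add[of ?q "n - i" i] i by simp
  have "qpoch ?q i * (qbinom ?q n i * qpoch ?q (n - i)) = qpoch ?q i * qpoch_tail ?q i (n - i)"
    using qbinom_qpoch[OF i, of ?q] s1 by (simp add: algebra_simps)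
  then have c: "qbinom ?q n i * qpoch ?q (n - i) = qpoch_tail ?q i (n - i)"
    using qpoch_X_power_nonzero[OF m] by simp
  have "qbinom ?q n i * qpoch ?q n = qpoch_tail ?q i (n - i) * qpoch_tail ?q (n - i) i"
    unfolding s2 c[symmetric] by (simp add: algebra_simps)
  moreover have "fps_eq_below k (qpoch_tail ?q i (n - i) * qpoch_tail ?q (n - i) i) (1 * 1)"
    by (rule fps_eq_below_mult; rule qpoch_tail_eq_below; fact)
  ultimately show ?thesis by simp
qed

lemma qpoch_X_power: "qpoch (fps_X ^ m :: rat fps) i = (\<Prod>j\<in>{1..i}. 1 - fps_X ^ (m * j))"
  unfolding qpoch_def by (simp add: prod.atLeast1_atMost_eq power_mult)

lemma qpinf_nth_qpoch:
  assumes m: "0 < m" and iL: "i \<le> L"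
  shows "fps_nth (qpinf m) i = fps_nth (qpoch (fps_X ^ m :: rat fps) L) i"
proof -
  let ?q = "fps_X ^ m :: rat fps"
  have "fps_nth (qpinf m) i = fps_nth (qpoch ?q i) i"
    unfolding qpinf_def qpoch_X_power by simp
  also have "qpoch ?q L = qpoch ?q i * qpoch_tail ?q i (L - i)" using qpoch_add[of ?q i "L - i"] iL by simp
  moreover have "fps_eq_below (Suc i) (qpoch ?q i * qpoch_tail ?q i (L - i)) (qpoch ?q i * 1)"
    by (rule fps_eq_below_mult[OF fps_eq_below_refl], rule qpoch_tail_eq_below)
       (use m in \<open>cases m; simp\<close>)
  ultimately show ?thesis unfolding fps_eq_below_def by simp
qed

lemma qpinf_eq_below:
  "0 < m \<Longrightarrow> k \<le> Suc L
     \<Longrightarrow> fps_eq_below k (qpinf m) (qpoch (fps_X ^ m :: rat fps) L)"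
  unfolding fps_eq_below_def using qpinf_nth_qpoch by simp

lemma psi_fps_eq_below:
  assumes m: "0 < m" and kL: "k \<le> L"
  shows "fps_eq_below k (\<Sum>a<L. fps_X ^ (m * tri a)) (psi_fps m)"
  unfolding fps_eq_below_def
proof (intro allI impI)
  fix t assume t: "t < k"
  have lhs: "fps_nth (\<Sum>a<L. fps_X ^ (m * tri a) :: rat fps) t = (\<Sum>a<L. if t = m * tri a then 1 else 0)"
    by (simp add: fps_sum_nth)
  show "fps_nth (\<Sum>a<L. fps_X ^ (m * tri a)) t = fps_nth (psi_fps m) t"
  proof (cases "\<exists>a. m * tri a = t")
    case True
    then obtain a0 where a0: "m * tri a0 = t" by blast
    have "a0 \<le> tri a0" by (rule le_tri)
    also have "tri a0 \<le> m * tri a0" using m by simp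
    finally have "a0 < L" using a0 t kL by simp
    have eq: "\<And>a. (t = m * tri a) = (a = a0)" using a0 m tri_inj by auto
    have "(\<Sum>a<L. if t = m * tri a then 1 else 0 :: rat) = (\<Sum>a<L. if a = a0 then 1 else 0)"
      by (simp add: eq)
    also have "\<dots> = 1" using \<open>a0 < L\<close> by simp
    finally show ?thesis using True lhs by (simp add: psi_fps_def)
  next
    case False
    then have "(\<Sum>a<L. if t = m * tri a then 1 else 0 :: rat) = 0" by (auto intro!: sum.neutral)
    then show ?thesis using False lhs by (simp add: psi_fps_def)
  qed
qed

lemma sum_atMost_add_split: fixes f :: "nat \<Rightarrow> 'a::comm_monoid_add" and N M :: nat
  shows "(\<Sum>i\<le>N + M. f i) = (\<Sum>i<N. f i) + (\<Sum>a\<le>M. f (N + a))"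
  by (induction M) (auto simp: lessThan_Suc_atMost[symmetric] add.assoc)

lemma sum_X_power_jtp_exp:
  "(\<Sum>i\<le>2*N. (fps_X :: rat fps) ^ (m * jtp_exp N i))
     = (\<Sum>a<N. fps_X ^ (m * tri a)) + (\<Sum>a\<le>N. fps_X ^ (m * tri a))"
proof -
  have "(\<Sum>i\<le>2*N. (fps_X :: rat fps) ^ (m * jtp_exp N i))
      = (\<Sum>i<N. fps_X ^ (m * jtp_exp N i)) + (\<Sum>a\<le>N. fps_X ^ (m * jtp_exp N (N + a)))"
    using sum_atMost_add_split[of "\<lambda>i. (fps_X :: rat fps) ^ (m * jtp_exp N i)" N N] by (simp add: mult_2)
  also have "(\<Sum>i<N. (fps_X :: rat fps) ^ (m * jtp_exp N i)) = (\<Sum>i<N. fps_X ^ (m * tri (N - Suc i)))"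
    by (rule sum.cong) (auto simp: jtp_exp_def)
  also have "\<dots> = (\<Sum>a<N. fps_X ^ (m * tri a))" by (rule sum.nat_diff_reindex)
  also have "(\<Sum>a\<le>N. (fps_X :: rat fps) ^ (m * jtp_exp N (N + a))) = (\<Sum>a\<le>N. fps_X ^ (m * tri a))"
    by (simp add: jtp_exp_def)
  finally show ?thesis .
qed

definition qpoch_plus :: "'a::comm_ring_1 \<Rightarrow> nat \<Rightarrow> 'a" where
  "qpoch_plus q n = (\<Prod>j<n. 1 + q ^ Suc j)"

lemma qpoch_plus_qpoch: "qpoch_plus q n * qpoch q n = qpoch (q ^ 2) n"
proof (induction n)
  case 0 then show ?case by (simp add: qpoch_plus_def)
next
  case (Suc n)
  have "qpoch_plus q (Suc n) * qpoch q (Suc n)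
      = (qpoch_plus q n * qpoch q n) * ((1 + q ^ Suc n) * (1 - q ^ Suc n))"
    by (simp add: qpoch_plus_def qpoch_Suc algebra_simps)
  also have "(1 + q ^ Suc n) * (1 - q ^ Suc n) = 1 - (q ^ 2) ^ Suc n"
    by (simp add: algebra_simps power_mult[symmetric] power2_eq_square power_add[symmetric] mult_2)
  finally show ?case using Suc.IH by (simp add: qpoch_Suc)
qed

lemma jtp_product_split:
  "(\<Prod>j<Suc n. (1 + q ^ Suc j) * (1 + q ^ j)) = qpoch_plus q (Suc n) * ((1 + 1) * qpoch_plus q n)"
  unfolding qpoch_plus_def prod.distrib by (simp add: prod.lessThan_Suc_shift del: prod.lessThan_Suc)

lemma jtp_exp_small:
  assumes "jtp_exp N i \<le> d" "N = 2 * d + 1" "i \<le> 2 * N"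
  shows "d \<le> i \<and> d \<le> 2 * N - i"
proof (cases "N \<le> i")
  case True
  then have "i - N \<le> d" using assms le_tri[of "i - N"] by (simp add: jtp_exp_def)
  then show ?thesis using True assms by simp
next
  case False
  then have "N - i - 1 \<le> d" using assms le_tri[of "N - i - 1"] by (simp add: jtp_exp_def)
  then show ?thesis using False assms by arith
qed

lemma jtp_sum_qpoch_eq_below_psi:
  fixes m N d :: nat
  assumes m: "0 < m" and N: "N = 2 * d + 1"
  shows "fps_eq_below (Suc d)
           ((\<Sum>i\<le>2*N. jtp_term (fps_X ^ m) N i) * qpoch (fps_X ^ m) (2 * N)) (2 * psi_fps m)"
proof -
  let ?q = "fps_X ^ m :: rat fps" and ?P = "qpoch (fps_X ^ m :: rat fps) (2 * N)"
  have m1: "\<And>x. x \<le> m * x" using m by simp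
  have coeff: "fps_eq_below (Suc d) (jtp_term ?q N i * ?P) (fps_X ^ (m * jtp_exp N i))"
    if i: "i \<le> 2 * N" for i
  proof (cases "Suc d \<le> m * jtp_exp N i")
    case True
    then show ?thesis
      using fps_eq_below_X_power_mult[OF True, of "qbinom ?q (2 * N) i * ?P"]
            fps_eq_below_X_power_mult[OF True, of 1]
      by (simp add: jtp_term_def power_mult mult.assoc fps_eq_below_def)
  next
    case False
    then have "jtp_exp N i \<le> d" using m1[of "jtp_exp N i"] by linarith
    from jtp_exp_small[OF this N i] have "d \<le> i" "d \<le> 2 * N - i" by auto
    then have "Suc d \<le> m * Suc i" "Suc d \<le> m * Suc (2 * N - i)"
      using m1[of "Suc i"] m1[of "Suc (2 * N - i)"] by simp_all
    then have "fps_eq_below (Suc d) (qbinom ?q (2 * N) i * ?P) 1"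
      by (rule qbinom_qpoch_eq_below[OF m i])
    then show ?thesis
      unfolding jtp_term_def power_mult[symmetric] mult.assoc
      by (metis fps_eq_below_mult fps_eq_below_refl mult.right_neutral)
  qed
  have "fps_eq_below (Suc d) (\<Sum>i\<le>2*N. jtp_term ?q N i * ?P) (\<Sum>i\<le>2*N. fps_X ^ (m * jtp_exp N i))"
    by (rule fps_eq_below_sum) (use coeff in auto)
  also have "(\<Sum>i\<le>2*N. fps_X ^ (m * jtp_exp N i)) =
      (\<Sum>a<N. fps_X ^ (m * tri a)) + (\<Sum>a<Suc N. (fps_X :: rat fps) ^ (m * tri a))"
    by (simp add: sum_X_power_jtp_exp lessThan_Suc_atMost)
  finally have "fps_eq_below (Suc d) (\<Sum>i\<le>2*N. jtp_term ?q N i * ?P)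
      ((\<Sum>a<N. fps_X ^ (m * tri a)) + (\<Sum>a<Suc N. fps_X ^ (m * tri a)))" .
  moreover have "fps_eq_below (Suc d)
      ((\<Sum>a<N. fps_X ^ (m * tri a)) + (\<Sum>a<Suc N. fps_X ^ (m * tri a))) (psi_fps m + psi_fps m)"
    by (rule fps_eq_below_add; rule psi_fps_eq_below[OF m]) (simp_all add: N)
  ultimately show ?thesis
    unfolding sum_distrib_right mult_2 by (rule fps_eq_below_trans)
qed

lemma jtp_sum_qpoch_square_eq_below:
  fixes m N d :: nat
  assumes m: "0 < m" and N: "N = 2 * d + 1"
  shows "fps_eq_below (Suc d)
           ((\<Sum>i\<le>2*N. jtp_term (fps_X ^ m) N i) * qpoch (fps_X ^ m) (2 * N) * qpoch (fps_X ^ m) (2 * N))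
           (2 * qpoch (fps_X ^ (2 * m)) N * qpoch (fps_X ^ (2 * m) :: rat fps) N)"
proof -
  let ?q = "fps_X ^ m :: rat fps" and ?P = "qpoch (fps_X ^ m :: rat fps) (2 * N)"
  have m1: "\<And>x. x \<le> m * x" using m by simp
  have q2: "?q ^ 2 = fps_X ^ (2 * m)" by (simp add: power_mult[symmetric] mult.commute)
  have "fps_eq_below (Suc d) ?P (qpoch ?q L)" if "d \<le> L" "L \<le> 2 * N" for L
  proof -
    have "?P = qpoch ?q L * qpoch_tail ?q L (2 * N - L)" using qpoch_add[of ?q L "2 * N - L"] that by simp
    moreover have "fps_eq_below (Suc d) (qpoch_tail ?q L (2 * N - L)) 1"
      by (rule qpoch_tail_eq_below, rule le_trans[OF _ m1]) (use that N in simp)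
    ultimately show ?thesis
      using fps_eq_below_mult[OF fps_eq_below_refl, of _ _ 1 "qpoch ?q L"] by simp
  qed
  then have PN: "fps_eq_below (Suc d) ?P (qpoch ?q N)"
        and PN1: "fps_eq_below (Suc d) ?P (qpoch ?q (N - 1))"
    using N by simp_all
  have "Suc d \<le> m * 2 * N" using m1[of "2 * N"] N by (simp add: mult.assoc)
  then have "fps_eq_below (Suc d) (qpoch (?q ^ 2) (N - 1) * (1 - (?q ^ 2) ^ N)) (qpoch (?q ^ 2) (N - 1) * 1)"
    unfolding q2 power_mult[symmetric]
    by (intro fps_eq_below_mult fps_eq_below_refl fps_eq_below_one_minus_X_power)
  then have Q2: "fps_eq_below (Suc d) (qpoch (?q ^ 2) (N - 1)) (qpoch (?q ^ 2) N)"
    using qpoch_Suc[of "?q ^ 2" "N - 1"] N by (simp add: fps_eq_below_sym)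
  have "(\<Sum>i\<le>2*N. jtp_term ?q N i) * ?P * ?P
      = 2 * (qpoch_plus ?q N * ?P) * (qpoch_plus ?q (N - 1) * ?P)"
    using finite_jacobi_triple_product[OF qpoch_X_power_nonzero[OF m], of N]
          jtp_product_split[of ?q "N - 1"] N
    by (simp add: algebra_simps)
  also have "fps_eq_below (Suc d) \<dots>
      (2 * (qpoch_plus ?q N * qpoch ?q N) * (qpoch_plus ?q (N - 1) * qpoch ?q (N - 1)))"
    by (intro fps_eq_below_mult fps_eq_below_refl PN PN1)
  also have "fps_eq_below (Suc d) \<dots> (2 * qpoch (?q ^ 2) N * qpoch (?q ^ 2) N)"
    unfolding qpoch_plus_qpoch by (intro fps_eq_below_mult fps_eq_below_refl Q2)
  finally show ?thesis unfolding q2 .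
qed

theorem gauss_psi_identity:
  assumes m: "0 < m"
  shows "qpinf (2 * m) ^ 2 = psi_fps m * qpinf m"
proof (rule fps_ext)
  fix d :: nat
  define N where "N = 2 * d + 1"
  let ?P = "qpoch (fps_X ^ m :: rat fps) (2 * N)" and ?Q = "qpoch (fps_X ^ (2 * m) :: rat fps) N"
  have P: "fps_eq_below (Suc d) ?P (qpinf m)"
    by (rule fps_eq_below_sym, rule qpinf_eq_below[OF m]) (simp add: N_def)
  have Q: "fps_eq_below (Suc d) ?Q (qpinf (2 * m))"
    by (rule fps_eq_below_sym, rule qpinf_eq_below) (use m in \<open>simp_all add: N_def\<close>)
  have "fps_eq_below (Suc d) (2 * psi_fps m * qpinf m) (2 * psi_fps m * ?P)"
    by (intro fps_eq_below_mult fps_eq_below_refl fps_eq_below_sym[OF P])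
  also have "fps_eq_below (Suc d) \<dots> ((\<Sum>i\<le>2*N. jtp_term (fps_X ^ m) N i) * ?P * ?P)"
    by (rule fps_eq_below_sym, rule fps_eq_below_mult[OF jtp_sum_qpoch_eq_below_psi[OF m N_def]]) simp
  also have "fps_eq_below (Suc d) \<dots> (2 * ?Q * ?Q)"
    by (rule jtp_sum_qpoch_square_eq_below[OF m N_def])
  also have "fps_eq_below (Suc d) \<dots> (2 * qpinf (2 * m) * qpinf (2 * m))"
    by (intro fps_eq_below_mult fps_eq_below_refl Q)
  finally show "fps_nth (qpinf (2 * m) ^ 2) d = fps_nth (psi_fps m * qpinf m) d"
    by (simp add: fps_eq_below_def numeral_fps_const fps_mult_left_const_nth mult.assoc power2_eq_square)
qed

section \<open>Representations of $2n$ as a sum of two odd squares\<close>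

lemma pos_mult_self_inj:
  fixes s t :: int
  assumes "0 < s" "0 < t" "s * s = t * t"
  shows "s = t"
  using assms by (metis power2_eq_square power2_eq_iff_nonneg less_imp_le)

lemma even_card_involution:
  assumes "finite S" "\<And>x. x \<in> S \<Longrightarrow> h x \<in> S"
    "\<And>x. x \<in> S \<Longrightarrow> h (h x) = x"
    "\<And>x. x \<in> S \<Longrightarrow> h x \<noteq> x"
  shows "even (card S)"
  using assms
proof (induction "card S" arbitrary: S rule: less_induct)
  case less
  show ?case
  proof (cases "S = {}")
    case True then show ?thesis by simp
  next
    case False
    then obtain x where x: "x \<in> S" by blast
    define S' where "S' = S - {x, h x}"
    have hx: "h x \<in> S" "h x \<noteq> x" using less.prems x by auto
    have "card S' = card S - 2" "2 \<le> card S"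
      using less.prems(1) x hx card_mono[OF less.prems(1), of "{x, h x}"]
      by (simp_all add: S'_def card_Diff_subset)
    then have cS: "card S = Suc (Suc (card S'))" by simp
    have "even (card S')"
    proof (rule less.hyps)
      show "card S' < card S" "finite S'" using cS less.prems(1) by (simp_all add: S'_def)
      fix y assume "y \<in> S'"
      then have y: "y \<in> S" "y \<noteq> x" "y \<noteq> h x" by (auto simp: S'_def)
      show "h (h y) = y" "h y \<noteq> y" using less.prems y by auto
      have "h y \<noteq> x" "h y \<noteq> h x" using less.prems(3) y x by metis+
      then show "h y \<in> S'" using less.prems(2) y by (simp add: S'_def)
    qed
    then show ?thesis using cS by simp
  qed
qed

lemma card_involution_parity:
  assumes fin: "finite S"
    and h: "\<And>x. x \<in> S \<Longrightarrow> h x \<in> S" "\<And>x. x \<in> S \<Longrightarrow> h (h x) = x"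
  shows "card S mod 2 = card {x\<in>S. h x = x} mod 2"
proof -
  have "even (card {x\<in>S. h x \<noteq> x})"
  proof (rule even_card_involution)
    fix x assume x: "x \<in> {x \<in> S. h x \<noteq> x}"
    then show "h (h x) = x" "h x \<noteq> x" using h by auto
    have "h (h x) \<noteq> h x" using h(2) x by auto
    then show "h x \<in> {x \<in> S. h x \<noteq> x}" using h(1) x by simp
  qed (use fin in simp)
  moreover have "card S = card {x\<in>S. h x = x} + card {x\<in>S. h x \<noteq> x}"
    using fin by (subst card_Un_disjoint[symmetric]) (auto intro: arg_cong[where f=card])
  ultimately show ?thesis by auto
qed

text \<open>Zagier's one-sentence proof of Fermat's two squares theorem, run on the set of
  solutions of $x^2 + 4yz = n$: the swap $y \leftrightarrow z$ and Zagier's involution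
  determine the parity of the number of solutions with $y = z$.\<close>

definition zagier_set :: "int \<Rightarrow> (int \<times> int \<times> int) set" where
  "zagier_set n = {(x,y,z). 0 < x \<and> 0 < y \<and> 0 < z \<and> x*x + 4*y*z = n}"

definition zagier_boundary :: "int \<Rightarrow> (int \<times> int \<times> int) set" where
  "zagier_boundary n = {(x,y,z) \<in> zagier_set n. x + z = y}"

definition zagier_inner :: "int \<Rightarrow> (int \<times> int \<times> int) set" where
  "zagier_inner n = {(x,y,z) \<in> zagier_set n. x + z \<noteq> y}"

definition zagier_map :: "int \<times> int \<times> int \<Rightarrow> int \<times> int \<times> int" where
  "zagier_map p = (case p of (x,y,z) \<Rightarrow>
     if x + z < y then (x + 2*z, z, y - x - z)
     else if x < 2*y then (2*y - x, y, x + z - y)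
     else (x - 2*y, x + z - y, y))"

lemma zagier_set_subset: "zagier_set n \<subseteq> {0..n} \<times> {0..n} \<times> {0..n}"
proof
  fix p assume "p \<in> zagier_set n"
  then obtain x y z where p: "p = (x,y,z)" "0 < x" "0 < y" "0 < z" "x*x + 4*y*z = n"
    by (auto simp: zagier_set_def)
  have "x \<le> x * x" "y \<le> y * z" "z \<le> y * z" "0 \<le> y * z" "0 \<le> x * x" "4*y*z = 4*(y*z)"
    using p by (simp_all add: mult_le_cancel_left1 mult_le_cancel_right1)
  then have "x \<le> n \<and> y \<le> n \<and> z \<le> n" using p by linarith
  then show "p \<in> {0..n} \<times> {0..n} \<times> {0..n}" using p by auto
qed

lemma finite_zagier_set: "finite (zagier_set n)"
  by (rule finite_subset[OF zagier_set_subset]) auto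

lemma finite_zagier_inner: "finite (zagier_inner n)"
  by (rule finite_subset[OF _ finite_zagier_set]) (auto simp: zagier_inner_def)

lemma odd_sum_square_4_mult:
  fixes x y z :: int
  assumes "odd n" "x*x + 4*y*z = n"
  shows "odd x"
  using assms by auto

lemma zagier_map_involution:
  assumes n: "odd n" and p: "p \<in> zagier_inner n"
  shows "zagier_map p \<in> zagier_inner n \<and> zagier_map (zagier_map p) = p
    \<and> (zagier_map p = p \<longleftrightarrow> fst p = fst (snd p))"
proof -
  obtain x y z where pp: "p = (x,y,z)" by (cases p) auto
  have h: "0 < x" "0 < y" "0 < z" "x*x + 4*y*z = n" "x + z \<noteq> y"
    using p pp by (auto simp: zagier_inner_def zagier_set_def)
  have x2: "x \<noteq> 2 * y" using odd_sum_square_4_mult[OF n h(4)] by auto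
  consider "x + z < y" | "\<not> x + z < y" "x < 2*y" | "\<not> x + z < y" "\<not> x < 2*y" by blast
  then show ?thesis
  proof cases
    case 1
    have z1: "zagier_map p = (x + 2*z, z, y - x - z)" using 1 by (simp add: zagier_map_def pp)
    have z2: "zagier_map (x + 2*z, z, y - x - z) = (x, y, z)" using 1 h by (simp add: zagier_map_def)
    have "(x + 2*z)*(x + 2*z) + 4*z*(y - x - z) = x*x + 4*y*z" by (simp add: algebra_simps)
    then have "zagier_map p \<in> zagier_inner n" using 1 h by (simp add: z1 zagier_inner_def zagier_set_def)
    then show ?thesis using z1 z2 pp 1 h by auto
  next
    case 2
    have z1: "zagier_map p = (2*y - x, y, x + z - y)" using 2 by (simp add: zagier_map_def pp)
    have z2: "zagier_map (2*y - x, y, x + z - y) = (x, y, z)" using 2 h by (simp add: zagier_map_def)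
    have "(2*y - x)*(2*y - x) + 4*y*(x + z - y) = x*x + 4*y*z" by (simp add: algebra_simps)
    then have "zagier_map p \<in> zagier_inner n" using 2 h by (simp add: z1 zagier_inner_def zagier_set_def)
    then show ?thesis using z1 z2 pp 2 h by auto
  next
    case 3
    have z1: "zagier_map p = (x - 2*y, x + z - y, y)" using 3 by (simp add: zagier_map_def pp)
    have z2: "zagier_map (x - 2*y, x + z - y, y) = (x, y, z)" using 3 h x2 by (simp add: zagier_map_def)
    have "(x - 2*y)*(x - 2*y) + 4*(x + z - y)*y = x*x + 4*y*z" by (simp add: algebra_simps)
    then have "zagier_map p \<in> zagier_inner n"
      using 3 h x2 by (simp add: z1 zagier_inner_def zagier_set_def)
    then show ?thesis using z1 z2 pp 3 h x2 by auto
  qed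
qed

lemma card_zagier_inner_parity:
  assumes n: "odd n"
  shows "card (zagier_inner n) mod 2 = card {p \<in> zagier_inner n. fst p = fst (snd p)} mod 2"
proof -
  have "card (zagier_inner n) mod 2 = card {p \<in> zagier_inner n. zagier_map p = p} mod 2"
    by (rule card_involution_parity[OF finite_zagier_inner]) (use zagier_map_involution[OF n] in auto)
  also have "{p \<in> zagier_inner n. zagier_map p = p} = {p \<in> zagier_inner n. fst p = fst (snd p)}"
    using zagier_map_involution[OF n] by auto
  finally show ?thesis .
qed

lemma card_zagier_set_parity:
  "card (zagier_set n) mod 2 = card {(x,y,z) \<in> zagier_set n. y = z} mod 2"
proof -
  have "card (zagier_set n) mod 2 = card {p \<in> zagier_set n. (\<lambda>(x,y,z). (x,z,y)) p = p} mod 2"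
    by (rule card_involution_parity[OF finite_zagier_set]) (auto simp: zagier_set_def algebra_simps)
  also have "{p \<in> zagier_set n. (\<lambda>(x,y,z). (x,z,y)) p = p} = {(x,y,z) \<in> zagier_set n. y = z}"
    by auto
  finally show ?thesis .
qed

lemma card_zagier_set_split: "card (zagier_set n) = card (zagier_inner n) + card (zagier_boundary n)"
proof -
  have "zagier_set n = zagier_inner n \<union> zagier_boundary n"
       "zagier_inner n \<inter> zagier_boundary n = {}"
    by (auto simp: zagier_inner_def zagier_boundary_def)
  moreover have "finite (zagier_inner n)" "finite (zagier_boundary n)"
    by (auto intro: finite_subset[OF _ finite_zagier_set] simp: zagier_inner_def zagier_boundary_def)
  ultimately show ?thesis by (simp add: card_Un_disjoint)
qed

lemma zagier_boundary_eq:
  assumes "(x, y, z) \<in> zagier_boundary n"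
  shows "(y + z) * (y + z) = n"
  using assms by (auto simp: zagier_boundary_def zagier_set_def algebra_simps)

lemma card_zagier_boundary:
  assumes s: "0 < s" "s * s = n"
  shows "card (zagier_boundary n) = nat ((s - 1) div 2)"
proof -
  have "zagier_boundary n = (\<lambda>z. (s - 2*z, s - z, z)) ` {1..(s - 1) div 2}"
  proof
    show "zagier_boundary n \<subseteq> (\<lambda>z. (s - 2*z, s - z, z)) ` {1..(s - 1) div 2}"
    proof
      fix p assume p: "p \<in> zagier_boundary n"
      then obtain x y z where xyz: "p = (x,y,z)" "0 < x" "0 < y" "0 < z" "x + z = y"
        by (auto simp: zagier_boundary_def zagier_set_def)
      have "y + z = s" using zagier_boundary_eq[of x y z n] p xyz s pos_mult_self_inj[of "y + z" s] by simp
      then show "p \<in> (\<lambda>z. (s - 2*z, s - z, z)) ` {1..(s - 1) div 2}"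
        using xyz by (auto intro!: image_eqI[where x=z])
    qed
    show "(\<lambda>z. (s - 2*z, s - z, z)) ` {1..(s - 1) div 2} \<subseteq> zagier_boundary n"
    proof
      fix p assume "p \<in> (\<lambda>z. (s - 2*z, s - z, z)) ` {1..(s - 1) div 2}"
      then obtain z where z: "1 \<le> z" "z \<le> (s - 1) div 2" "p = (s - 2*z, s - z, z)" by auto
      have "(s - 2*z)*(s - 2*z) + 4*(s - z)*z = s * s" by (simp add: algebra_simps)
      moreover have "0 < s - 2*z" using z by linarith
      ultimately show "p \<in> zagier_boundary n"
        using z s by (auto simp: zagier_boundary_def zagier_set_def)
    qed
  qed
  moreover have "inj_on (\<lambda>z. (s - 2*z, s - z, z)) {1..(s - 1) div 2}" by (auto simp: inj_on_def)
  ultimately show ?thesis by (simp add: card_image)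
qed

definition small_divisors :: "int \<Rightarrow> int set" where
  "small_divisors n = {d. 0 < d \<and> d dvd n \<and> d * d < n}"

lemma mult_mod_4_eq_1_imp_cong:
  fixes d e :: int
  assumes "(d * e) mod 4 = 1"
  shows "d mod 4 = e mod 4"
proof -
  have "((d mod 4) * (e mod 4)) mod 4 = 1" using assms by (simp add: mod_mult_eq)
  moreover have "d mod 4 \<in> {0,1,2,3}" "e mod 4 \<in> {0,1,2,3}" by auto
  ultimately show ?thesis by auto
qed

text \<open>The solutions with $x = y$ are $n = d\,(d + 4z)$, i.e.\ the divisors $d < \sqrt n$.\<close>

lemma card_zagier_inner_diagonal:
  assumes n: "n mod 4 = 1"
  shows "card {p \<in> zagier_inner n. fst p = fst (snd p)} = card (small_divisors n)"
proof -
  let ?F = "{p \<in> zagier_inner n. fst p = fst (snd p)}"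
  have "bij_betw fst ?F (small_divisors n)"
  proof (rule bij_betw_byWitness[where f'="\<lambda>d. (d, d, (n div d - d) div 4)"])
    show "\<forall>a\<in>?F. (fst a, fst a, (n div fst a - fst a) div 4) = a"
    proof
      fix p assume "p \<in> ?F"
      then obtain y z where p: "p = (y,y,z)" "0 < y" "y*y + 4*y*z = n"
        by (auto simp: zagier_inner_def zagier_set_def)
      then have "n div y = y + 4*z" by (auto simp: algebra_simps)
      then show "(fst p, fst p, (n div fst p - fst p) div 4) = p" using p by simp
    qed
    show "fst ` ?F \<subseteq> small_divisors n"
    proof
      fix d assume "d \<in> fst ` ?F"
      then obtain z where p: "0 < d" "0 < z" "d*d + 4*d*z = n"
        by (auto simp: zagier_inner_def zagier_set_def)
      then have "n = d * (d + 4*z)" by (simp add: algebra_simps)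
      moreover have "0 < d * z" using p by simp
      ultimately show "d \<in> small_divisors n" using p by (auto simp: small_divisors_def)
    qed
    show "\<forall>d\<in>small_divisors n. fst (d, d, (n div d - d) div 4) = d" by simp
    show "(\<lambda>d. (d, d, (n div d - d) div 4)) ` small_divisors n \<subseteq> ?F"
    proof
      fix p assume "p \<in> (\<lambda>d. (d, d, (n div d - d) div 4)) ` small_divisors n"
      then obtain d where d: "0 < d" "d dvd n" "d*d < n" and p: "p = (d, d, (n div d - d) div 4)"
        by (auto simp: small_divisors_def)
      define e where "e = n div d"
      have ne: "n = d * e" using d by (simp add: e_def)
      have "d mod 4 = e mod 4" using n ne mult_mod_4_eq_1_imp_cong by simp
      then obtain z where z: "e - d = 4 * z" by (metis mod_eq_dvd_iff dvdE)
      have "d < e" using d ne by (metis mult_less_cancel_left_pos)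
      then have "0 < z" using z by linarith
      have "d*d + 4*d*z = n" using ne z by (simp add: algebra_simps)
      then show "p \<in> ?F" using p d z \<open>0 < z\<close>
        by (simp add: zagier_inner_def zagier_set_def e_def[symmetric])
    qed
  qed
  then show ?thesis by (rule bij_betw_same_card)
qed

definition odd_square_pairs :: "int \<Rightarrow> (int \<times> int) set" where
  "odd_square_pairs n = {(u,v). 0 < u \<and> 0 < v \<and> odd u \<and> odd v \<and> u*u + v*v = 2*n}"

lemma odd_square_pairs_nonempty:
  assumes "odd_square_pairs n \<noteq> {}"
  shows "n mod 4 = 1"
proof -
  obtain u v where q: "odd u" "odd v" "u*u + v*v = 2*n"
    using assms by (auto simp: odd_square_pairs_def)
  obtain i where i: "u = 2*i+1" using q by (metis oddE)
  obtain j where j: "v = 2*j+1" using q by (metis oddE)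
  obtain a where "i*i + i = 2*a" using evenE[of "i*i + i"] by auto
  moreover obtain b where "j*j + j = 2*b" using evenE[of "j*j + j"] by auto
  moreover have "n = 2*(i*i + i + j*j + j) + 1" using q i j by (simp add: algebra_simps)
  ultimately show ?thesis by presburger
qed

lemma finite_odd_square_pairs: "finite (odd_square_pairs n)"
proof (rule finite_subset)
  show "odd_square_pairs n \<subseteq> {0..2*n} \<times> {0..2*n}"
  proof
    fix q assume "q \<in> odd_square_pairs n"
    then obtain u v where q: "q = (u,v)" "0 < u" "0 < v" "u*u + v*v = 2*n"
      by (auto simp: odd_square_pairs_def)
    have "u \<le> u*u" "v \<le> v*v" "0 \<le> u*u" "0 \<le> v*v" using q by (simp_all add: mult_le_cancel_left1)
    then have "u \<le> 2*n \<and> v \<le> 2*n" using q by linarith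
    then show "q \<in> {0..2*n} \<times> {0..2*n}" using q by auto
  qed
qed simp

text \<open>The pairs $u < v$ correspond to the solutions $(x, y, y)$ of $x^2 + 4y^2 = n$ via
  $(u, v) = (|x - 2y|, x + 2y)$: of $(u + v)/2$ and $(v - u)/2$ exactly one is odd;
  that one is $x$ and the other is $2y$.\<close>

definition sym_to_pair :: "int \<times> int \<times> int \<Rightarrow> int \<times> int" where
  "sym_to_pair = (\<lambda>(x,y,_). (\<bar>x - 2*y\<bar>, x + 2*y))"

definition pair_to_sym :: "int \<times> int \<Rightarrow> int \<times> int \<times> int" where
  "pair_to_sym = (\<lambda>(u,v). if odd ((u+v) div 2) then ((u+v) div 2, (v-u) div 4, (v-u) div 4)
                          else ((v-u) div 2, (u+v) div 4, (u+v) div 4))"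

lemma sym_to_pair_in:
  assumes n: "odd n" and p: "p \<in> {(x,y,z) \<in> zagier_set n. y = z}"
  shows "sym_to_pair p \<in> {(u,v) \<in> odd_square_pairs n. u < v}"
proof -
  obtain x y where xy: "p = (x,y,y)" "0 < x" "0 < y" "x*x + 4*y*y = n"
    using p by (auto simp: zagier_set_def)
  have "odd x" using odd_sum_square_4_mult[OF n xy(4)] .
  moreover have "(x - 2*y) * (x - 2*y) + (x + 2*y) * (x + 2*y) = 2 * (x*x + 4*y*y)"
    by (simp add: algebra_simps)
  ultimately show ?thesis
    using xy by (auto simp: sym_to_pair_def odd_square_pairs_def abs_mult_self_eq)
qed

lemma pair_to_sym_sym_to_pair:
  assumes n: "odd n" and p: "p \<in> {(x,y,z) \<in> zagier_set n. y = z}"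
  shows "pair_to_sym (sym_to_pair p) = p"
proof -
  obtain x y where xy: "p = (x,y,y)" "0 < x" "0 < y" "x*x + 4*y*y = n"
    using p by (auto simp: zagier_set_def)
  have "odd x" using odd_sum_square_4_mult[OF n xy(4)] .
  then show ?thesis
    using xy by (cases "2*y < x") (auto simp: sym_to_pair_def pair_to_sym_def)
qed

lemma pair_to_sym_in_and_inverse:
  assumes q: "q \<in> {(u,v) \<in> odd_square_pairs n. u < v}"
  shows "pair_to_sym q \<in> {(x,y,z) \<in> zagier_set n. y = z} \<and> sym_to_pair (pair_to_sym q) = q"
proof -
  obtain u v where uv: "q = (u,v)" "0 < u" "odd u" "odd v" "u < v" "u*u + v*v = 2*n"
    using q by (auto simp: odd_square_pairs_def)
  obtain i where i: "u = 2*i + 1" using uv by (metis oddE)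
  obtain j where j: "v = 2*j + 1" using uv by (metis oddE)
  have s: "(u + v) div 2 = i + j + 1" "(v - u) div 2 = j - i" using i j by simp_all
  have i0: "0 \<le> i" "i < j" using i j uv by simp_all
  have nn: "n = 2*i*i + 2*i + 2*j*j + 2*j + 1" using uv(6) i j by (simp add: algebra_simps)
  show ?thesis
  proof (cases "odd (i + j + 1)")
    case True
    then have "even (j - i)" by auto
    then obtain k where k: "j - i = 2 * k" by blast
    have "odd ((u + v) div 2)" using s(1) True by simp
    moreover have "(v - u) div 4 = k" using i j k by simp
    ultimately have "pair_to_sym q = (i + j + 1, k, k)" using uv s by (simp add: pair_to_sym_def)
    moreover have "j = i + 2 * k" using k by simp
    then have "(i + j + 1) * (i + j + 1) + 4 * k * k = n" using nn by (simp add: algebra_simps)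
    ultimately show ?thesis
      using uv i0 i j k by (auto simp: sym_to_pair_def zagier_set_def)
  next
    case False
    then obtain k where k: "i + j + 1 = 2 * k" by blast
    have "\<not> odd ((u + v) div 2)" using s(1) False by simp
    moreover have "(u + v) div 4 = k" using i j k by simp
    ultimately have "pair_to_sym q = (j - i, k, k)" using uv s by (simp add: pair_to_sym_def)
    moreover have "4 * k * k = (i + j + 1) * (i + j + 1)" by (simp add: k)
    then have "(j - i) * (j - i) + 4 * k * k = n" using nn by (simp add: algebra_simps)
    ultimately show ?thesis
      using uv i0 i j k by (auto simp: sym_to_pair_def zagier_set_def)
  qed
qed

lemma card_odd_square_pairs:
  assumes n: "odd n"
  shows "card (odd_square_pairs n)
           = card {s. 0 < s \<and> s * s = n} + 2 * card {(x,y,z) \<in> zagier_set n. y = z}"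
proof -
  let ?L = "{(u,v) \<in> odd_square_pairs n. u < v}" and ?G = "{(u,v) \<in> odd_square_pairs n. v < u}"
    and ?D = "{(u,v) \<in> odd_square_pairs n. u = v}"
  have fin: "finite ?L" "finite ?G" "finite ?D"
    by (auto intro: finite_subset[OF _ finite_odd_square_pairs])
  have "odd_square_pairs n = ?D \<union> (?L \<union> ?G)" by auto
  moreover have "card (?L \<union> ?G) = card ?L + card ?G"
    by (rule card_Un_disjoint) (use fin in auto)
  moreover have "card (?D \<union> (?L \<union> ?G)) = card ?D + card (?L \<union> ?G)"
    by (rule card_Un_disjoint) (use fin in auto)
  ultimately have "card (odd_square_pairs n) = card ?D + (card ?L + card ?G)" by simp
  moreover have "card ?G = card ?L"
    by (rule bij_betw_same_card[where f="\<lambda>(u,v). (v,u)"],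
        rule bij_betw_byWitness[where f'="\<lambda>(u,v). (v,u)"]) (auto simp: odd_square_pairs_def add.commute)
  moreover have "card ?L = card {(x,y,z) \<in> zagier_set n. y = z}"
  proof (rule bij_betw_same_card[where f=pair_to_sym], rule bij_betw_byWitness[where f'=sym_to_pair])
    show "\<forall>a\<in>?L. sym_to_pair (pair_to_sym a) = a"
      by (intro ballI) (rule pair_to_sym_in_and_inverse[THEN conjunct2])
    show "pair_to_sym ` ?L \<subseteq> {(x,y,z) \<in> zagier_set n. y = z}"
      by (intro image_subsetI) (rule pair_to_sym_in_and_inverse[THEN conjunct1])
    show "\<forall>a\<in>{(x,y,z) \<in> zagier_set n. y = z}. pair_to_sym (sym_to_pair a) = a"
      by (intro ballI) (rule pair_to_sym_sym_to_pair[OF n])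
    show "sym_to_pair ` {(x,y,z) \<in> zagier_set n. y = z} \<subseteq> ?L"
      by (intro image_subsetI) (rule sym_to_pair_in[OF n])
  qed
  moreover have "card ?D = card {s. 0 < s \<and> s * s = n}"
    by (rule bij_betw_same_card[where f=fst], rule bij_betw_byWitness[where f'="\<lambda>s. (s, s)"])
       (use n in \<open>auto simp: odd_square_pairs_def\<close>)
  ultimately show ?thesis by simp
qed

lemma card_odd_square_pairs_mod_4:
  assumes n: "n mod 4 = 1"
  shows "[int (card (odd_square_pairs n))
          = 2 * int (card (small_divisors n)) + (\<Sum>s | 0 < s \<and> s * s = n. s)] (mod 4)"
proof -
  have on: "odd n" using n by (metis dvd_mod_iff even_numeral odd_one)
  let ?R = "{s. 0 < s \<and> s * s = n}"
  have parity: "(F + D + B) mod 2 = 0"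
    if "Z mod 2 = F mod 2" "Z = I + B" "I mod 2 = T mod 2" "T = D" for Z F I B T D :: nat
    using that by presburger
  have arith: "[int (R + 2 * F) = int R + 2 * int D + 2 * int B] (mod 4)"
    if "(F + D + B) mod 2 = 0" for R F D B :: nat
    unfolding cong_iff_dvd_diff using that by presburger
  have key: "[int (card (odd_square_pairs n))
      = int (card ?R) + 2 * int (card (small_divisors n)) + 2 * int (card (zagier_boundary n))] (mod 4)"
    unfolding card_odd_square_pairs[OF on]
    by (rule arith, rule parity[OF card_zagier_set_parity card_zagier_set_split
          card_zagier_inner_parity[OF on] card_zagier_inner_diagonal[OF n]])
  show ?thesis
  proof (cases "\<exists>s>0. s * s = n")
    case True
    then obtain s where s: "s > 0" "s * s = n" by blast
    then have R: "?R = {s}" using pos_mult_self_inj by auto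
    have "odd s" using on s by auto
    then have "1 + 2 * int (card (zagier_boundary n)) = s"
      using s card_zagier_boundary[OF s] by (auto elim!: oddE)
    then have "int (card ?R) + 2 * int (card (small_divisors n)) + 2 * int (card (zagier_boundary n))
        = 2 * int (card (small_divisors n)) + (\<Sum>s | 0 < s \<and> s * s = n. s)"
      using R by simp
    with key show ?thesis by simp
  next
    case False
    then have R: "?R = {}" by auto
    have "zagier_boundary n = {}"
      using False zagier_boundary_eq by (fastforce simp: zagier_boundary_def zagier_set_def)
    then show ?thesis using key by (simp add: R)
  qed
qed

definition divisor_sum :: "int \<Rightarrow> int" where
  "divisor_sum n = (\<Sum>d | 0 < d \<and> d dvd n. d)"

lemma divisor_sum_split:
  assumes n: "0 < n"
  shows "divisor_sum n = (\<Sum>d\<in>small_divisors n. d + n div d) + (\<Sum>s | 0 < s \<and> s * s = n. s)"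
proof -
  let ?Div = "{d. 0 < d \<and> d dvd n}"
  let ?Up = "{d. 0 < d \<and> d dvd n \<and> n < d * d}"
  let ?Sq = "{d. 0 < d \<and> d * d = n}"
  have finDiv: "finite ?Div" by (rule finite_subset[of _ "{1..n}"]) (auto simp: n zdvd_imp_le)
  have fD: "finite (small_divisors n)" "finite ?Up" "finite ?Sq"
    by (rule finite_subset[OF _ finDiv]; auto simp: small_divisors_def)+
  have "?Div = small_divisors n \<union> (?Up \<union> ?Sq)" by (auto simp: small_divisors_def)
  moreover have "small_divisors n \<inter> (?Up \<union> ?Sq) = {}" "?Up \<inter> ?Sq = {}"
    by (auto simp: small_divisors_def)
  ultimately have S1: "divisor_sum n = sum id (small_divisors n) + (sum id ?Up + sum id ?Sq)"
    unfolding divisor_sum_def using fD by (simp add: sum.union_disjoint)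
  have h3: "n div (n div d) = d" if d0: "0 < d" and dd: "d dvd n" for d
  proof -
    obtain e where e: "n = d * e" using dd dvdE by blast
    then have "e \<noteq> 0" using n by auto
    then show ?thesis using e d0 by simp
  qed
  have h1: "n div d \<in> ?Up" if d: "d \<in> small_divisors n" for d
  proof -
    have d1: "0 < d" "d dvd n" "d * d < n" using d by (auto simp: small_divisors_def)
    then obtain e where e: "n = d * e" by blast
    have ep: "0 < e" using e d1 n by (auto simp: zero_less_mult_iff)
    have de: "d < e" using e d1 by (metis mult_less_cancel_left_pos)
    have nd: "n div d = e" using e d1 by simp
    have "n < e * e" using de e ep by (simp add: mult_strict_right_mono)
    then show "n div d \<in> ?Up" using nd e ep by auto
  qed
  have h2: "n div d \<in> small_divisors n" if d: "d \<in> ?Up" for d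
  proof -
    have d1: "0 < d" "d dvd n" "n < d * d" using d by auto
    then obtain e where e: "n = d * e" by blast
    have ep: "0 < e" using e d1 n by (auto simp: zero_less_mult_iff)
    have de: "e < d" using e d1 by (metis mult_less_cancel_left_pos)
    have nd: "n div d = e" using e d1 by simp
    have "e * e < n" using de e ep by (simp add: mult_strict_right_mono)
    then show "n div d \<in> small_divisors n" using nd e ep by (auto simp: small_divisors_def)
  qed
  have S2: "sum id ?Up = (\<Sum>d\<in>small_divisors n. n div d)"
    by (rule sum.reindex_bij_witness[where i="\<lambda>d. n div d" and j="\<lambda>d. n div d"])
       (use h1 h2 h3 in \<open>auto simp: small_divisors_def\<close>)
  show ?thesis using S1 S2 by (simp add: sum.distrib)
qed

lemma odd_add_cong_mult:
  fixes d e :: int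
  assumes "odd d" "odd e"
  shows "[d + e = d * e + 1] (mod 4)"
proof -
  obtain a b where "d = 2 * a + 1" "e = 2 * b + 1" using assms by (auto elim!: oddE)
  then have "d * e + 1 - (d + e) = 4 * (a * b)" by (simp add: algebra_simps)
  then show ?thesis unfolding cong_iff_dvd_diff by (metis dvd_minus_iff dvd_triv_left minus_diff_eq)
qed

text \<open>For odd $n$ each pair of complementary divisors $d < n/d$ contributes
  $d + n/d \equiv n + 1 \pmod 4$; only a square root of $n$ is unpaired.\<close>

lemma divisor_sum_cong:
  assumes n: "odd n" "0 < n"
  shows "[divisor_sum n = (n + 1) * int (card (small_divisors n))
            + (\<Sum>s | 0 < s \<and> s * s = n. s)] (mod 4)"
proof -
  have "[(\<Sum>d\<in>small_divisors n. d + n div d) = (\<Sum>d\<in>small_divisors n. n + 1)] (mod 4)"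
  proof (rule cong_sum)
    fix d assume "d \<in> small_divisors n"
    then have nd: "n = d * (n div d)" by (auto simp: small_divisors_def)
    then have "odd d" "odd (n div d)" using n(1) by (metis even_mult_iff)+
    then show "[d + n div d = n + 1] (mod 4)" using odd_add_cong_mult nd by metis
  qed
  then show ?thesis
    unfolding divisor_sum_split[OF n(2)] by (simp add: cong_add mult.commute)
qed

lemma card_odd_square_pairs_cong_divisor_sum:
  assumes n: "odd n" "0 < n"
  shows "[int (card (odd_square_pairs n)) = divisor_sum n] (mod 4)"
proof -
  let ?C = "int (card (small_divisors n))" and ?S = "\<Sum>s | 0 < s \<and> s * s = n. s"
  have "n mod 4 \<in> {0,1,2,3}" by auto
  moreover have "odd (n mod 4)" using n(1) by (simp add: odd_iff_mod_2_eq_one mod_mod_cancel)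
  ultimately consider "n mod 4 = 1" | "n mod 4 = 3" by auto
  then show ?thesis
  proof cases
    case 1
    then have "[2 = n + 1] (mod 4)" by (simp add: cong_def mod_add_left_eq[symmetric])
    then have "[2 * ?C + ?S = (n + 1) * ?C + ?S] (mod 4)" by (intro cong_add cong_mult cong_refl)
    with card_odd_square_pairs_mod_4[OF 1] have "[int (card (odd_square_pairs n)) = (n + 1) * ?C + ?S] (mod 4)"
      by (rule cong_trans)
    then show ?thesis using divisor_sum_cong[OF n] by (metis cong_sym cong_trans)
  next
    case 2
    then have "[n + 1 = 0] (mod 4)" by (simp add: cong_def mod_add_left_eq[symmetric])
    then have C0: "[(n + 1) * ?C + ?S = 0 * ?C + ?S] (mod 4)" by (intro cong_add cong_mult cong_refl)
    have "\<not> (\<exists>s. s * s = n)"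
    proof
      assume "\<exists>s. s * s = n"
      then obtain s where "s * s = n" by blast
      then have "(s mod 4 * (s mod 4)) mod 4 = 3" using 2 by (simp add: mod_mult_eq)
      moreover have "s mod 4 \<in> {0,1,2,3}" by auto
      ultimately show False by auto
    qed
    then have "?S = 0" by simp
    then have "[divisor_sum n = 0] (mod 4)" using cong_trans[OF divisor_sum_cong[OF n] C0] by simp
    moreover have "odd_square_pairs n = {}" using odd_square_pairs_nonempty 2 by fastforce
    ultimately show ?thesis by (simp add: cong_sym)
  qed
qed

section \<open>Congruences modulo 2 between power series with integral coefficients\<close>

definition fps_int :: "rat fps \<Rightarrow> bool" where
  "fps_int f \<longleftrightarrow> (\<forall>n. fps_nth f n \<in> \<int>)"

definition fps_even :: "rat fps \<Rightarrow> bool" where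
  "fps_even f \<longleftrightarrow> (\<forall>n. fps_nth f n / 2 \<in> \<int>)"

definition fps_cong2 :: "rat fps \<Rightarrow> rat fps \<Rightarrow> bool" where
  "fps_cong2 f g \<longleftrightarrow> fps_even (f - g)"

lemma fps_int_1[simp]: "fps_int 1" by (simp add: fps_int_def fps_one_nth)
lemma fps_int_X[simp]: "fps_int fps_X" by (simp add: fps_int_def fps_X_def)
lemma fps_int_X_power[simp]: "fps_int (fps_X ^ e)" by (simp add: fps_int_def)
lemma fps_int_add[simp]: "fps_int f \<Longrightarrow> fps_int g \<Longrightarrow> fps_int (f + g)"
  by (simp add: fps_int_def)
lemma fps_int_diff[simp]: "fps_int f \<Longrightarrow> fps_int g \<Longrightarrow> fps_int (f - g)"
  by (simp add: fps_int_def)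
lemma fps_int_mult[simp]: "fps_int f \<Longrightarrow> fps_int g \<Longrightarrow> fps_int (f * g)"
  unfolding fps_int_def fps_mult_nth by (auto intro!: Ints_sum Ints_mult)
lemma fps_int_sum:
  "(\<And>i. i \<in> A \<Longrightarrow> fps_int (f i)) \<Longrightarrow> fps_int (\<Sum>i\<in>A. f i)"
  unfolding fps_int_def fps_sum_nth by (auto intro!: Ints_sum)

lemma fps_int_inverse:
  assumes f: "fps_int f" and f0: "fps_nth f 0 = 1"
  shows "fps_int (inverse f)"
  unfolding fps_int_def
proof
  fix n show "fps_nth (inverse f) n \<in> \<int>"
  proof (induction n rule: less_induct)
    case (less n)
    show ?case
    proof (cases n)
      case 0 then show ?thesis using f0 by simp
    next
      case (Suc n')
      have "f * inverse f = 1" using f0 by (simp add: inverse_mult_eq_1')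
      then have "fps_nth (f * inverse f) n = 0" using Suc by simp
      then have "(\<Sum>i=0..n. fps_nth f i * fps_nth (inverse f) (n - i)) = 0" by (simp add: fps_mult_nth)
      moreover have "(\<Sum>i=0..n. fps_nth f i * fps_nth (inverse f) (n - i))
          = fps_nth f 0 * fps_nth (inverse f) n + (\<Sum>i=Suc 0..n. fps_nth f i * fps_nth (inverse f) (n - i))"
        by (simp add: sum.atLeast_Suc_atMost)
      ultimately have e: "fps_nth (inverse f) n = - (\<Sum>i=Suc 0..n. fps_nth f i * fps_nth (inverse f) (n - i))"
        using f0 by simp
      have "(\<Sum>i=Suc 0..n. fps_nth f i * fps_nth (inverse f) (n - i)) \<in> \<int>"
      proof (rule Ints_sum)
        fix i assume "i \<in> {Suc 0..n}"
        then have "n - i < n" by simp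
        then show "fps_nth f i * fps_nth (inverse f) (n - i) \<in> \<int>"
          using less.IH f by (simp add: fps_int_def Ints_mult)
      qed
      then show ?thesis using e by simp
    qed
  qed
qed

lemma fps_even_mult: "fps_even h \<Longrightarrow> fps_int g \<Longrightarrow> fps_even (h * g)"
proof -
  assume h: "fps_even h" and g: "fps_int g"
  show "fps_even (h * g)" unfolding fps_even_def
  proof
    fix n
    have "fps_nth (h * g) n / 2 = (\<Sum>i=0..n. (fps_nth h i / 2) * fps_nth g (n - i))"
      by (simp add: fps_mult_nth sum_divide_distrib)
    also have "\<dots> \<in> \<int>"
    proof (rule Ints_sum)
      fix i show "(fps_nth h i / 2) * fps_nth g (n - i) \<in> \<int>"
        using h g unfolding fps_even_def fps_int_def by (intro Ints_mult) auto
    qed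
    finally show "fps_nth (h * g) n / 2 \<in> \<int>" .
  qed
qed

lemma fps_even_add: "fps_even f \<Longrightarrow> fps_even g \<Longrightarrow> fps_even (f + g)"
  unfolding fps_even_def by (simp add: add_divide_distrib)

lemma fps_even_uminus: "fps_even f \<Longrightarrow> fps_even (- f)"
  unfolding fps_even_def by simp

lemma fps_cong2_refl[simp]: "fps_cong2 f f" by (simp add: fps_cong2_def fps_even_def)
lemma fps_cong2_sym: "fps_cong2 f g \<Longrightarrow> fps_cong2 g f"
  unfolding fps_cong2_def using fps_even_uminus by fastforce
lemma fps_cong2_add:
  "fps_cong2 f f' \<Longrightarrow> fps_cong2 g g' \<Longrightarrow> fps_cong2 (f + g) (f' + g')"
  unfolding fps_cong2_def using fps_even_add by (metis add_diff_add)
lemma fps_cong2_mult: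
  assumes "fps_cong2 f f'" "fps_cong2 g g'" "fps_int f'" "fps_int g"
  shows "fps_cong2 (f * g) (f' * g')"
proof -
  have "f * g - f' * g' = (f - f') * g + (g - g') * f'" by (simp add: algebra_simps)
  moreover have "fps_even ((f - f') * g)" using assms fps_even_mult fps_cong2_def by blast
  moreover have "fps_even ((g - g') * f')" using assms fps_even_mult fps_cong2_def by blast
  ultimately show ?thesis unfolding fps_cong2_def using fps_even_add by simp
qed

lemma fps_cong2_inverse:
  assumes "fps_cong2 f g" "fps_int f" "fps_int g" "fps_nth f 0 = 1" "fps_nth g 0 = 1"
  shows "fps_cong2 (inverse f) (inverse g)"
proof -
  have "inverse f - inverse g = (g - f) * (inverse f * inverse g)"
  proof -
    have "inverse f - inverse g = inverse f * (g * inverse g) - inverse g * (f * inverse f)"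
      using assms by (simp add: inverse_mult_eq_1')
    then show ?thesis by (simp add: algebra_simps)
  qed
  moreover have "fps_even (g - f)" using assms(1) fps_cong2_sym fps_cong2_def by blast
  moreover have "fps_int (inverse f * inverse g)" using assms by (simp add: fps_int_inverse)
  ultimately show ?thesis unfolding fps_cong2_def using fps_even_mult by simp
qed

lemma fps_cong2_sum:
  "(\<And>i. i \<in> A \<Longrightarrow> fps_cong2 (f i) (g i))
     \<Longrightarrow> fps_cong2 (\<Sum>i\<in>A. f i) (\<Sum>i\<in>A. g i)"
  by (induction A rule: infinite_finite_induct) (auto intro: fps_cong2_add)


lemma fps_cong2_one_minus_one_plus: "fps_cong2 (1 - fps_X ^ e) (1 + fps_X ^ e)"
proof -
  have "(1 - fps_X ^ e) - (1 + fps_X ^ e) = - (fps_X ^ e + fps_X ^ e :: rat fps)" by simp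
  moreover have "fps_even (fps_X ^ e + fps_X ^ e :: rat fps)" unfolding fps_even_def
  proof
    fix n
    have "fps_nth (fps_X ^ e + fps_X ^ e :: rat fps) n = (if n = e then 2 else 0)"
      by (simp only: fps_add_nth fps_X_power_nth) simp
    then show "fps_nth (fps_X ^ e + fps_X ^ e :: rat fps) n / 2 \<in> \<int>" by simp
  qed
  ultimately show ?thesis unfolding fps_cong2_def using fps_even_uminus by simp
qed

section \<open>Splitting the summands of $A(q)$\<close>

abbreviation X :: "rat fps" where
  "X \<equiv> fps_X"

lemma X_mult_X2_power: "X * (X ^ 2) ^ k = X ^ (2 * k + 1)"
  by (simp add: power_mult[symmetric] power_add mult.commute)

lemma fqpoch_X_Suc: "fqpoch X (X ^ 2) (Suc k) = fqpoch X (X ^ 2) k * (1 - X ^ (2 * k + 1))"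
  by (simp add: fqpoch_def X_mult_X2_power del: power_Suc)

lemma fqpoch_neg_X_Suc: "fqpoch (- X) (X ^ 2) (Suc k) = fqpoch (- X) (X ^ 2) k * (1 + X ^ (2 * k + 1))"
  by (simp add: fqpoch_def X_mult_X2_power del: power_Suc)

lemma fqpoch_neg_X_nth_0: "fps_nth (fqpoch (- X) (X ^ 2) k) 0 = 1"
  by (induction k) (simp_all add: fqpoch_X_Suc fqpoch_neg_X_Suc fps_mult_nth_0 del: power_Suc,
      simp add: fqpoch_def)

lemma fps_int_fqpoch_X: "fps_int (fqpoch X (X ^ 2) k)" "fps_int (fqpoch (- X) (X ^ 2) k)"
  by (induction k) (simp_all add: fqpoch_X_Suc fqpoch_neg_X_Suc del: power_Suc, simp_all add: fqpoch_def)

lemma fps_cong2_fqpoch_X: "fps_cong2 (fqpoch X (X ^ 2) k) (fqpoch (- X) (X ^ 2) k)"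
proof (induction k)
  case 0 then show ?case by (simp add: fqpoch_def)
next
  case (Suc k)
  show ?case unfolding fqpoch_X_Suc fqpoch_neg_X_Suc
    by (rule fps_cong2_mult[OF Suc fps_cong2_one_minus_one_plus]) (simp_all add: fps_int_fqpoch_X del: power_Suc)
qed

definition qratio :: "nat \<Rightarrow> rat fps" where
  "qratio k = fqpoch X (X ^ 2) k * inverse (fqpoch (- X) (X ^ 2) k)"

text \<open>With $r_j = (q;q^2)_j/(-q;q^2)_j$ (\<open>qratio j\<close>), telescoping
  $r_k = 1 + \sum_{j<k} (r_{j+1} - r_j)$ splits the $k$-th summand of $A(q)$ as
  \<open>Aterm_head k - 2 * Aterm_tail k\<close>. Replacing each $r_j$ by $1$ and each denominator
  $1 + q^e$ by $1 - q^e$ turns \<open>Aterm_tail k\<close> into \<open>Aterm_tail_mod_2 k\<close> without changing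
  it modulo 2.\<close>

definition Aterm_head :: "nat \<Rightarrow> rat fps" where
  "Aterm_head k = X ^ k * inverse (1 + X ^ (2*k))"

definition Aterm_tail :: "nat \<Rightarrow> rat fps" where
  "Aterm_tail k = X ^ k * inverse (1 + X ^ (2*k))
     * (\<Sum>j<k. qratio j * X ^ (2*j+1) * inverse (1 + X ^ (2*j+1)))"

definition Aterm_tail_mod_2 :: "nat \<Rightarrow> rat fps" where
  "Aterm_tail_mod_2 k = X ^ k * inverse (1 - X ^ (2*k))
     * (\<Sum>j<k. X ^ (2*j+1) * inverse (1 - X ^ (2*j+1)))"

lemma qratio_Suc:
  "qratio (Suc j) - qratio j = - 2 * (qratio j * X ^ (2*j+1) * inverse (1 + X ^ (2*j+1)))"
proof -
  let ?x = "X ^ (2*j+1)"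
  let ?i = "inverse (1 + ?x)"
  have "inverse (fqpoch (- X) (X ^ 2) (Suc j)) = inverse (fqpoch (- X) (X ^ 2) j) * ?i"
    by (simp add: fqpoch_neg_X_Suc fps_inverse_mult del: power_Suc)
  then have "qratio (Suc j) = qratio j * ((1 - ?x) * ?i)"
    by (simp add: qratio_def fqpoch_X_Suc algebra_simps del: power_Suc)
  moreover have "(1 + ?x) * ?i = 1" by (rule inverse_mult_eq_1') simp
  ultimately have "qratio (Suc j) - qratio j = qratio j * ((1 - ?x) * ?i) - qratio j * ((1 + ?x) * ?i)"
    by simp
  then show ?thesis by (simp add: algebra_simps)
qed

lemma Aterm_decomp:
  assumes k: "0 < k"
  shows "Aterm k = Aterm_head k - 2 * Aterm_tail k"
proof -
  have "fps_nth (fqpoch (- X) (X ^ 2) k * (1 + X ^ (2*k))) 0 \<noteq> 0"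
    using k by (simp add: fqpoch_neg_X_nth_0 fps_mult_nth_0)
  then have "Aterm k = X ^ k * qratio k * inverse (1 + X ^ (2*k))"
    unfolding Aterm_def qratio_def by (simp add: fps_divide_unit fps_inverse_mult mult.assoc)
  also have "qratio k = 1 + (\<Sum>j<k. qratio (Suc j) - qratio j)"
    by (simp only: sum_lessThan_telescope) (simp add: qratio_def fqpoch_def)
  finally show ?thesis
    unfolding qratio_Suc Aterm_head_def Aterm_tail_def
    by (simp add: algebra_simps sum_negf sum.distrib sum_distrib_left)
qed

lemma fps_int_qratio: "fps_int (qratio j)"
  unfolding qratio_def by (simp add: fps_int_inverse fps_int_fqpoch_X fqpoch_neg_X_nth_0)

lemma fps_cong2_inverse_one_plus_one_minus:
  "0 < e \<Longrightarrow> fps_cong2 (inverse (1 + X ^ e)) (inverse (1 - X ^ e))"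
  by (rule fps_cong2_inverse) (auto intro: fps_cong2_sym fps_cong2_one_minus_one_plus)

lemma fps_cong2_qratio: "fps_cong2 (qratio j) 1"
proof -
  let ?D = "fqpoch (- X) (X ^ 2) j"
  have "fps_cong2 (fqpoch X (X ^ 2) j * inverse ?D) (?D * inverse ?D)"
    by (rule fps_cong2_mult[OF fps_cong2_fqpoch_X fps_cong2_refl])
       (auto simp: fps_int_inverse fps_int_fqpoch_X fqpoch_neg_X_nth_0)
  moreover have "?D * inverse ?D = 1" by (rule inverse_mult_eq_1') (simp add: fqpoch_neg_X_nth_0)
  ultimately show ?thesis by (simp add: qratio_def)
qed

lemma fps_cong2_Aterm_tail: "0 < k \<Longrightarrow> fps_cong2 (Aterm_tail k) (Aterm_tail_mod_2 k)"
  unfolding Aterm_tail_def Aterm_tail_mod_2_def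
proof (rule fps_cong2_mult)
  assume k: "0 < k"
  show "fps_cong2 (X ^ k * inverse (1 + X ^ (2 * k))) (X ^ k * inverse (1 - X ^ (2 * k)))"
    by (rule fps_cong2_mult[OF fps_cong2_refl fps_cong2_inverse_one_plus_one_minus])
       (use k in \<open>auto simp: fps_int_inverse\<close>)
  show "fps_cong2 (\<Sum>j<k. qratio j * X ^ (2 * j + 1) * inverse (1 + X ^ (2 * j + 1)))
            (\<Sum>j<k. X ^ (2 * j + 1) * inverse (1 - X ^ (2 * j + 1)))"
  proof (rule fps_cong2_sum)
    fix j
    have "fps_cong2 (qratio j * X ^ (2 * j + 1) * inverse (1 + X ^ (2 * j + 1)))
                    (1 * X ^ (2 * j + 1) * inverse (1 - X ^ (2 * j + 1)))"
      by (intro fps_cong2_mult fps_cong2_qratio fps_cong2_refl fps_cong2_inverse_one_plus_one_minus)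
         (auto simp: fps_int_qratio fps_int_inverse)
    then show "fps_cong2 (qratio j * X ^ (2 * j + 1) * inverse (1 + X ^ (2 * j + 1)))
                         (X ^ (2 * j + 1) * inverse (1 - X ^ (2 * j + 1)))"
      by simp
  qed
  show "fps_int (X ^ k * inverse (1 - X ^ (2 * k)))" using k by (simp add: fps_int_inverse)
  show "fps_int (\<Sum>j<k. qratio j * X ^ (2 * j + 1) * inverse (1 + X ^ (2 * j + 1)))"
    by (auto simp: fps_int_inverse fps_int_qratio intro!: fps_int_sum)
qed


section \<open>Solutions of $km + dt = n$ with $m, d$ odd and $d < 2k$\<close>

definition quad_reps :: "int \<Rightarrow> (int \<times> int \<times> int \<times> int) set" where
  "quad_reps n = {(k,m,d,t). 0 < k \<and> 0 < m \<and> 0 < d \<and> 0 < t \<and> odd m \<and> odd d \<and> d < 2*k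
                   \<and> k*m + d*t = n}"

definition even_odd_quads :: "int \<Rightarrow> (int \<times> int \<times> int \<times> int) set" where
  "even_odd_quads n = {(k,m,d,t). 0 < k \<and> 0 < m \<and> 0 < d \<and> 0 < t \<and> even k \<and> odd t \<and> odd m
                        \<and> odd d \<and> k*m + d*t = n}"

lemma finite_pos_quads:
  "finite {(k,m,d,t). 0 < k \<and> 0 < m \<and> 0 < d \<and> 0 < t \<and> k*m + d*t = (n::int)}"
proof (rule finite_subset)
  show "{(k,m,d,t). 0 < k \<and> 0 < m \<and> 0 < d \<and> 0 < t \<and> k*m + d*t = n}
          \<subseteq> {0..n} \<times> {0..n} \<times> {0..n} \<times> {0..n}"
  proof
    fix p assume "p \<in> {(k,m,d,t). 0 < k \<and> 0 < m \<and> 0 < d \<and> 0 < t \<and> k*m + d*t = (n::int)}"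
    then obtain k m d t where p: "p = (k,m,d,t)" "0 < k" "0 < m" "0 < d" "0 < t" "k*m + d*t = n"
      by auto
    have "k \<le> k*m" "m \<le> k*m" "d \<le> d*t" "t \<le> d*t"
      using p by (simp_all add: mult_le_cancel_left1 mult_le_cancel_right1)
    then have "k \<le> n \<and> m \<le> n \<and> d \<le> n \<and> t \<le> n" using p by linarith
    then show "p \<in> {0..n} \<times> {0..n} \<times> {0..n} \<times> {0..n}" using p by auto
  qed
qed simp

lemma finite_quad_reps: "finite (quad_reps n)"
  by (rule finite_subset[OF _ finite_pos_quads[of n]]) (auto simp: quad_reps_def)

lemma finite_even_odd_quads: "finite (even_odd_quads n)"
  by (rule finite_subset[OF _ finite_pos_quads[of n]]) (auto simp: even_odd_quads_def)

text \<open>For odd $n$ exactly one of $km$ and $dt$ is even; the solutions with $k$ odd are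
  carried to solutions with $k$ even by $(k,m,d,t) \mapsto (t,d,k,m)$.\<close>

lemma card_quad_reps_odd:
  assumes n: "odd n"
  shows "card {(k,m,d,t) \<in> quad_reps n. odd k} = card {(k,m,d,t) \<in> even_odd_quads n. m < 2*d}"
proof (rule bij_betw_same_card[where f="\<lambda>(k,m,d,t). (t,d,k,m)"],
       rule bij_betw_byWitness[where f'="\<lambda>(k,m,d,t). (d,t,m,k)"])
  show "(\<lambda>(k,m,d,t). (t,d,k,m)) ` {(k,m,d,t) \<in> quad_reps n. odd k}
          \<subseteq> {(k,m,d,t) \<in> even_odd_quads n. m < 2*d}"
  proof
    fix q assume "q \<in> (\<lambda>(k,m,d,t). (t,d,k,m)) ` {(k,m,d,t) \<in> quad_reps n. odd k}"
    then obtain k m d t where p: "q = (t,d,k,m)" "0 < k" "0 < m" "0 < d" "0 < t" "odd m" "odd d"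
      "d < 2*k" "k*m + d*t = n" "odd k"
      by (auto simp: quad_reps_def)
    then have "even t" using n by (metis even_add even_mult_iff)
    then show "q \<in> {(k,m,d,t) \<in> even_odd_quads n. m < 2*d}"
      using p by (auto simp: even_odd_quads_def algebra_simps)
  qed
qed (auto simp: quad_reps_def even_odd_quads_def algebra_simps)

lemma card_even_odd_quads_shear:
  "card {(k,m,d,t) \<in> even_odd_quads n. 2*k < d} = card {(k,m,d,t) \<in> even_odd_quads n. 2*d < m}"
proof (rule bij_betw_same_card[where f="\<lambda>(k,m,d,t). (k, m + 2*t, t, d - 2*k)"],
       rule bij_betw_byWitness[where f'="\<lambda>(k,m,d,t). (k, m - 2*d, t + 2*k, d)"])
  have "k * (m + 2*t) + t * (d - 2*k) = k*m + d*t" for k m d t :: int by (simp add: algebra_simps)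
  then show "(\<lambda>(k,m,d,t). (k, m + 2*t, t, d - 2*k)) ` {(k,m,d,t) \<in> even_odd_quads n. 2*k < d}
               \<subseteq> {(k,m,d,t) \<in> even_odd_quads n. 2*d < m}"
    by (auto simp: even_odd_quads_def)
  have "k * (m - 2*d) + (t + 2*k) * d = k*m + d*t" for k m d t :: int by (simp add: algebra_simps)
  then show "(\<lambda>(k,m,d,t). (k, m - 2*d, t + 2*k, d)) ` {(k,m,d,t) \<in> even_odd_quads n. 2*d < m}
               \<subseteq> {(k,m,d,t) \<in> even_odd_quads n. 2*k < d}"
    by (auto simp: even_odd_quads_def)
qed auto

lemma card_partition2:
  assumes "finite S" "S = A \<union> B" "A \<inter> B = {}"
  shows "card S = card A + card B"
  using assms by (metis card_Un_disjoint finite_Un)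

text \<open>Since $d$ and $m$ are odd, neither $d = 2k$ nor $m = 2d$ can occur, so
  \<open>even_odd_quads\<close> splits in two ways; comparing the splittings shows that the
  solutions with $k$ odd and with $k$ even are equinumerous.\<close>

lemma even_card_quad_reps:
  assumes n: "odd n"
  shows "even (card (quad_reps n))"
proof -
  let ?Wa = "{(k,m,d,t) \<in> even_odd_quads n. d < 2*k}" and ?Ga = "{(k,m,d,t) \<in> even_odd_quads n. 2*k < d}"
    and ?Mb = "{(k,m,d,t) \<in> even_odd_quads n. m < 2*d}" and ?Gb = "{(k,m,d,t) \<in> even_odd_quads n. 2*d < m}"
  have "{(k,m,d,t) \<in> quad_reps n. even k} = ?Wa"
    using n by (auto simp: quad_reps_def even_odd_quads_def)
  moreover have "card (quad_reps n)
      = card {(k,m,d,t) \<in> quad_reps n. even k} + card {(k,m,d,t) \<in> quad_reps n. odd k}"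
    by (rule card_partition2[OF finite_quad_reps]) auto
  ultimately have "card (quad_reps n) = card ?Wa + card ?Mb" by (simp add: card_quad_reps_odd[OF n])
  moreover have "card (even_odd_quads n) = card ?Wa + card ?Ga"
  proof (rule card_partition2[OF finite_even_odd_quads])
    show "even_odd_quads n = ?Wa \<union> ?Ga" by (auto simp: even_odd_quads_def; presburger)
    show "?Wa \<inter> ?Ga = {}" by auto
  qed
  moreover have "card (even_odd_quads n) = card ?Mb + card ?Gb"
  proof (rule card_partition2[OF finite_even_odd_quads])
    show "even_odd_quads n = ?Mb \<union> ?Gb" by (auto simp: even_odd_quads_def; presburger)
    show "?Mb \<inter> ?Gb = {}" by auto
  qed
  ultimately show ?thesis using card_even_odd_quads_shear[of n] by simp
qed

lemma inverse_one_minus_const_X_power: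
  fixes c :: "'a::field"
  assumes e: "0 < e"
  shows "inverse (1 - fps_const c * fps_X ^ e) = Abs_fps (\<lambda>i. if e dvd i then c ^ (i div e) else 0)"
proof -
  let ?G = "Abs_fps (\<lambda>i. if e dvd i then c ^ (i div e) else 0)"
  have "(1 - fps_const c * fps_X ^ e) * ?G = 1"
  proof (rule fps_ext)
    fix n
    have "fps_nth ((1 - fps_const c * fps_X ^ e) * ?G) n
        = fps_nth ?G n - c * (if n < e then 0 else fps_nth ?G (n - e))"
      by (simp add: algebra_simps fps_X_power_mult_nth mult.assoc)
    also have "\<dots> = (if n = 0 then 1 else 0)"
    proof (cases "n < e")
      case True
      then have "e dvd n \<longleftrightarrow> n = 0" using e by (auto dest: dvd_imp_le)
      then show ?thesis using True by simp
    next
      case False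
      then have "e dvd n \<longleftrightarrow> e dvd (n - e)" by (simp add: dvd_minus_self)
      moreover have "n div e = Suc ((n - e) div e)" if dv: "e dvd n"
      proof -
        obtain q where q: "n = e * q" using dv by blast
        then have "0 < q" using False e by (cases q) auto
        then have "n - e = e * (q - 1)" using q by (simp add: diff_mult_distrib2)
        then show ?thesis using q e \<open>0 < q\<close> by simp
      qed
      ultimately show ?thesis using False e by auto
    qed
    finally show "fps_nth ((1 - fps_const c * fps_X ^ e) * ?G) n = fps_nth 1 n" by simp
  qed
  then show ?thesis by (rule fps_inverse_unique)
qed

lemma X_power_mult_inverse_one_minus_nth:
  assumes "0 < e"
  shows "fps_nth (X ^ a * inverse (1 - X ^ e)) i = (if a \<le> i \<and> e dvd (i - a) then 1 else 0)"
  using inverse_one_minus_const_X_power[OF assms, of "1 :: rat"] by (simp add: fps_X_power_mult_nth)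

lemma Aterm_head_nth:
  assumes k: "0 < k"
  shows "fps_nth (Aterm_head k) n
           = (if k \<le> n \<and> (2*k) dvd (n - k) then (-1) ^ ((n - k) div (2*k)) else 0)"
proof -
  have "inverse (1 + X ^ (2 * k)) = Abs_fps (\<lambda>i. if 2 * k dvd i then (-1) ^ (i div (2 * k)) else 0)"
    using inverse_one_minus_const_X_power[of "2 * k" "-1 :: rat"] k by (simp flip: fps_const_neg)
  then show ?thesis by (simp add: Aterm_head_def fps_X_power_mult_nth)
qed

lemma Aterm_tail_mod_2_nth:
  assumes k: "0 < k"
  shows "fps_nth (Aterm_tail_mod_2 k) n
           = (\<Sum>j<k. \<Sum>i=0..n. (if k \<le> i \<and> (2*k) dvd (i - k) then 1 else 0)
                 * (if 2*j+1 \<le> n - i \<and> (2*j+1) dvd (n - i - (2*j+1)) then 1 else 0))"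
proof -
  have "Aterm_tail_mod_2 k = (\<Sum>j<k. (X ^ k * inverse (1 - X ^ (2*k)))
                                       * (X ^ (2*j+1) * inverse (1 - X ^ (2*j+1))))"
    unfolding Aterm_tail_mod_2_def by (simp add: sum_distrib_left mult.assoc)
  then have "fps_nth (Aterm_tail_mod_2 k) n = (\<Sum>j<k. \<Sum>i=0..n.
      fps_nth (X ^ k * inverse (1 - X ^ (2*k))) i * fps_nth (X ^ (2*j+1) * inverse (1 - X ^ (2*j+1))) (n - i))"
    by (simp only: fps_sum_nth fps_mult_nth)
  also have "\<dots> = (\<Sum>j<k. \<Sum>i=0..n. (if k \<le> i \<and> (2*k) dvd (i - k) then 1 else 0)
                 * (if 2*j+1 \<le> n - i \<and> (2*j+1) dvd (n - i - (2*j+1)) then 1 else 0))"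
    using k by (intro sum.cong refl, subst X_power_mult_inverse_one_minus_nth, simp,
                subst X_power_mult_inverse_one_minus_nth) simp_all
  finally show ?thesis .
qed

text \<open>Summing over $k$, the $n$-th coefficient of \<open>\<Sum>k. Aterm_tail_mod_2 k\<close> counts
  the triples $(k, j, i)$ with $i = k(2q + 1)$ and $n - i$ a positive multiple of $2j + 1$,
  $j < k$; these are the solutions of $km + dt = n$ with $d = 2j + 1 < 2k$.\<close>

definition split_points :: "nat \<Rightarrow> nat \<Rightarrow> nat \<Rightarrow> nat set" where
  "split_points n k j = {i\<in>{0..n}. (k \<le> i \<and> (2*k) dvd (i - k))
                          \<and> (2*j+1 \<le> n - i \<and> (2*j+1) dvd (n - i - (2*j+1)))}"

definition split_triples :: "nat \<Rightarrow> (nat \<times> nat \<times> nat) set" where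
  "split_triples n = Sigma {1..n} (\<lambda>k. Sigma {..<k} (\<lambda>j. split_points n k j))"

lemma sum_Aterm_tail_mod_2_nth:
  "(\<Sum>k\<in>{1..n}. fps_nth (Aterm_tail_mod_2 k) n) = of_nat (card (split_triples n))"
proof -
  have fin: "finite (split_points n k j)" for k j by (simp add: split_points_def)
  have "(\<Sum>k\<in>{1..n}. fps_nth (Aterm_tail_mod_2 k) n)
      = (\<Sum>k\<in>{1..n}. \<Sum>j<k. of_nat (card (split_points n k j)))"
  proof (intro sum.cong refl)
    fix k assume "k \<in> {1..n}"
    then have k: "0 < k" by simp
    have "fps_nth (Aterm_tail_mod_2 k) n = (\<Sum>j<k. \<Sum>i\<in>{0..n}. of_bool (i \<in> split_points n k j))"
      unfolding Aterm_tail_mod_2_nth[OF k] by (intro sum.cong refl) (auto simp: split_points_def)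
    moreover have "{0..n} \<inter> {i. i \<in> split_points n k j} = split_points n k j" for j
      by (auto simp: split_points_def)
    ultimately show "fps_nth (Aterm_tail_mod_2 k) n = (\<Sum>j<k. of_nat (card (split_points n k j)))"
      by simp
  qed
  also have "\<dots> = of_nat (card (split_triples n))"
    unfolding split_triples_def by (simp add: card_SigmaI finite_SigmaI fin)
  finally show ?thesis .
qed

definition quad_reps_nat :: "nat \<Rightarrow> (nat \<times> nat \<times> nat \<times> nat) set" where
  "quad_reps_nat n = {(k,m,d,t). 0 < k \<and> 0 < m \<and> 0 < d \<and> 0 < t \<and> odd m \<and> odd d \<and> d < 2*k
                       \<and> k*m + d*t = n}"

definition triple_to_quad :: "nat \<Rightarrow> nat \<times> nat \<times> nat \<Rightarrow> nat \<times> nat \<times> nat \<times> nat" where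
  "triple_to_quad n = (\<lambda>(k,j,i). (k, i div k, 2*j+1, (n - i) div (2*j+1)))"

definition quad_to_triple :: "nat \<times> nat \<times> nat \<times> nat \<Rightarrow> nat \<times> nat \<times> nat" where
  "quad_to_triple = (\<lambda>(k,m,d,t). (k, (d - 1) div 2, k*m))"

lemma triple_to_quad_in:
  assumes "p \<in> split_triples n"
  shows "triple_to_quad n p \<in> quad_reps_nat n \<and> quad_to_triple (triple_to_quad n p) = p"
proof -
  obtain k j i where p: "p = (k,j,i)" "1 \<le> k" "j < k" "i \<le> n"
    "k \<le> i" "(2*k) dvd (i - k)" "2*j+1 \<le> n - i" "(2*j+1) dvd (n - i - (2*j+1))"
    using assms by (auto simp: split_triples_def split_points_def)
  obtain q where "i - k = 2*k*q" using p by blast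
  then have iq: "i = k * (2*q + 1)" using p by (simp add: algebra_simps)
  obtain r where "n - i - (2*j+1) = (2*j+1) * r" using p by blast
  then have nr: "n - i = (2*j+1) * (r + 1)" using p by (simp add: algebra_simps)
  have "i div k = 2*q + 1" using iq p by simp
  moreover have "(n - i) div (2*j+1) = r + 1" unfolding nr by (rule nonzero_mult_div_cancel_left) simp
  moreover have "k * (2*q+1) + (2*j+1) * (r+1) = n" using iq nr p by simp
  ultimately show ?thesis
    using p iq by (auto simp: quad_reps_nat_def triple_to_quad_def quad_to_triple_def)
qed

lemma quad_to_triple_in:
  assumes "p \<in> quad_reps_nat n"
  shows "quad_to_triple p \<in> split_triples n \<and> triple_to_quad n (quad_to_triple p) = p"
proof -
  obtain k m d t where p: "p = (k,m,d,t)" "0 < k" "0 < m" "0 < d" "0 < t" "odd m" "odd d"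
    "d < 2*k" "k*m + d*t = n" using assms by (auto simp: quad_reps_nat_def)
  obtain q where q: "m = 2*q + 1" using p(6) oddE by blast
  obtain j where j: "d = 2*j + 1" using p(7) oddE by blast
  have "(2*j+1) dvd (n - k*m - (2*j+1))"
  proof -
    have "n - k*m - d = d*(t - 1)" using p by (simp add: diff_mult_distrib2)
    then show ?thesis unfolding j[symmetric] by simp
  qed
  moreover have "k \<le> k*m" "k*m - k = 2*k*q" "n - k*m = d*t" "d \<le> d*t" "k*m \<le> n"
    using p q by (simp_all add: algebra_simps)
  moreover have "k \<le> n" using \<open>k \<le> k*m\<close> \<open>k*m \<le> n\<close> by linarith
  moreover have "(n - k*m) div d = t" using p by (simp flip: p(9))
  ultimately show ?thesis
    using p j by (auto simp: split_triples_def split_points_def triple_to_quad_def quad_to_triple_def)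
qed

lemma card_split_triples: "card (split_triples n) = card (quad_reps_nat n)"
proof (rule bij_betw_same_card[where f="triple_to_quad n"],
       rule bij_betw_byWitness[where f'=quad_to_triple])
  show "\<forall>a\<in>split_triples n. quad_to_triple (triple_to_quad n a) = a"
    by (intro ballI) (rule triple_to_quad_in[THEN conjunct2])
  show "triple_to_quad n ` split_triples n \<subseteq> quad_reps_nat n"
    by (intro image_subsetI) (rule triple_to_quad_in[THEN conjunct1])
  show "\<forall>a\<in>quad_reps_nat n. triple_to_quad n (quad_to_triple a) = a"
    by (intro ballI) (rule quad_to_triple_in[THEN conjunct2])
  show "quad_to_triple ` quad_reps_nat n \<subseteq> split_triples n"
    by (intro image_subsetI) (rule quad_to_triple_in[THEN conjunct1])
qed

lemma card_quad_reps_nat: "card (quad_reps_nat n) = card (quad_reps (int n))"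
proof -
  let ?f = "\<lambda>(k,m,d,t). (int k, int m, int d, int t)"
  have "quad_reps (int n) = ?f ` quad_reps_nat n"
  proof (intro equalityI subsetI)
    fix p assume "p \<in> quad_reps (int n)"
    then obtain k m d t where p: "p = (k,m,d,t)" "0 < k" "0 < m" "0 < d" "0 < t" "odd m" "odd d"
      "d < 2*k" "k*m + d*t = int n" by (auto simp: quad_reps_def)
    have "nat k * nat m + nat d * nat t = n"
      using p by (simp add: nat_mult_distrib[symmetric] nat_add_distrib[symmetric])
    moreover have "odd (nat m)" "odd (nat d)" using p by (simp_all add: even_nat_iff)
    ultimately have "(nat k, nat m, nat d, nat t) \<in> quad_reps_nat n"
      using p by (auto simp: quad_reps_nat_def)
    then show "p \<in> ?f ` quad_reps_nat n" using p by force
  next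
    fix p assume "p \<in> ?f ` quad_reps_nat n"
    then obtain k m d t where p: "p = (int k, int m, int d, int t)" "0 < k" "0 < m" "0 < d" "0 < t"
      "odd m" "odd d" "d < 2*k" "k*m + d*t = n" by (auto simp: quad_reps_nat_def)
    have "int k * int m + int d * int t = int n" using p(9) by (metis of_nat_add of_nat_mult)
    then show "p \<in> quad_reps (int n)" using p by (auto simp: quad_reps_def)
  qed
  moreover have "inj_on ?f (quad_reps_nat n)" by (auto simp: inj_on_def)
  ultimately show ?thesis by (simp add: card_image)
qed

section \<open>The right-hand side\<close>

lemma qpinf_nth_0: "fps_nth (qpinf m) 0 = 1"
  by (simp add: qpinf_def)

lemma qpinf_power_4_divide:
  assumes m: "0 < m"
  shows "qpinf (2 * m) ^ 4 / qpinf m ^ 2 = psi_fps m ^ 2"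
proof -
  have "qpinf (2 * m) ^ 4 = (qpinf (2 * m) ^ 2) ^ 2" by (simp flip: power_mult)
  also have "\<dots> = psi_fps m ^ 2 * qpinf m ^ 2"
    unfolding gauss_psi_identity[OF m] by (simp add: power_mult_distrib)
  finally have "qpinf (2 * m) ^ 4 / qpinf m ^ 2 = psi_fps m ^ 2 * (qpinf m ^ 2 * inverse (qpinf m ^ 2))"
    by (simp add: fps_divide_unit power2_eq_square fps_mult_nth_0 qpinf_nth_0 mult.assoc)
  also have "qpinf m ^ 2 * inverse (qpinf m ^ 2) = 1"
    by (rule inverse_mult_eq_1') (simp add: power2_eq_square fps_mult_nth_0 qpinf_nth_0)
  finally show ?thesis by simp
qed

definition tri_pairs :: "nat \<Rightarrow> nat \<Rightarrow> (nat \<times> nat) set" where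
  "tri_pairs m N = {(a,b). m * tri a + m * tri b = N}"

lemma psi_fps_square_nth:
  assumes m: "0 < m"
  shows "fps_nth (psi_fps m ^ 2) N = of_nat (card (tri_pairs m N))"
proof -
  let ?P = "\<lambda>i. (\<exists>a. m * tri a = i) \<and> (\<exists>b. m * tri b = N - i)"
  have "fps_nth (psi_fps m ^ 2) N = (\<Sum>i=0..N. fps_nth (psi_fps m) i * fps_nth (psi_fps m) (N - i))"
    by (simp add: power2_eq_square fps_mult_nth)
  also have "\<dots> = (\<Sum>i=0..N. (of_bool (?P i) :: rat))"
    by (intro sum.cong refl) (simp add: psi_fps_def)
  also have "\<dots> = of_nat (card ({0..N} \<inter> {i. ?P i}))" by simp
  also have "{0..N} \<inter> {i. ?P i} = (\<lambda>(a,b). m * tri a) ` tri_pairs m N"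
  proof (intro equalityI subsetI)
    fix i assume "i \<in> {0..N} \<inter> {i. ?P i}"
    then obtain a b where ab: "i \<le> N" "m * tri a = i" "m * tri b = N - i" by auto
    then have "(a, b) \<in> tri_pairs m N" by (simp add: tri_pairs_def)
    then show "i \<in> (\<lambda>(a,b). m * tri a) ` tri_pairs m N" using ab(2) by force
  qed (auto simp: tri_pairs_def)
  also have "card \<dots> = card (tri_pairs m N)"
  proof (rule card_image, rule inj_onI, clarify)
    fix a b a' b' assume ab: "(a, b) \<in> tri_pairs m N" "(a', b') \<in> tri_pairs m N"
      and eq: "m * tri a = m * tri a'"
    from ab have "m * tri a + m * tri b = N" "m * tri a' + m * tri b' = N"
      by (simp_all add: tri_pairs_def)
    with eq have "m * tri b = m * tri b'" by linarith
    then show "a = a' \<and> b = b'" using eq m by (simp add: tri_inj)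
  qed
  finally show ?thesis .
qed

lemma double_tri: "2 * tri a = a * (a + 1)"
  by (induction a) (auto simp: algebra_simps)

lemma odd_square_eq_tri:
  "(2 * int a + 1) * (2 * int a + 1) = 8 * int (tri a) + 1"
proof -
  have "int (2 * tri a) = int (a * (a + 1))" by (simp only: double_tri)
  then show ?thesis by (simp add: algebra_simps)
qed

lemma card_tri_pairs:
  assumes n: "0 < n"
  shows "card (tri_pairs 4 (n - 1)) = card (odd_square_pairs (int n))"
proof -
  let ?f = "\<lambda>(a,b). (2 * int a + 1, 2 * int b + 1)"
  have "odd_square_pairs (int n) = ?f ` tri_pairs 4 (n - 1)"
  proof (intro equalityI subsetI)
    fix y assume "y \<in> odd_square_pairs (int n)"
    then obtain u v where y: "y = (u,v)" "0 < u" "0 < v" "odd u" "odd v" "u * u + v * v = 2 * int n"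
      by (auto simp: odd_square_pairs_def)
    obtain i where i: "u = 2*i+1" using y(4) oddE by blast
    obtain j where j: "v = 2*j+1" using y(5) oddE by blast
    define a where "a = nat i"
    define b where "b = nat j"
    have ab: "u = 2 * int a + 1" "v = 2 * int b + 1" using i j y by (simp_all add: a_def b_def)
    then have "8 * int (tri a) + 8 * int (tri b) + 2 = 2 * int n"
      using y(6)[unfolded ab] odd_square_eq_tri[of a] odd_square_eq_tri[of b] by linarith
    then have "(a, b) \<in> tri_pairs 4 (n - 1)" by (simp add: tri_pairs_def)
    then show "y \<in> ?f ` tri_pairs 4 (n - 1)" using y ab by force
  next
    fix y assume "y \<in> ?f ` tri_pairs 4 (n - 1)"
    then obtain a b where y: "y = (2 * int a + 1, 2 * int b + 1)" "4 * tri a + 4 * tri b = n - 1"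
      by (auto simp: tri_pairs_def)
    then have "(2 * int a + 1) * (2 * int a + 1) + (2 * int b + 1) * (2 * int b + 1) = 2 * int n"
      using n odd_square_eq_tri[of a] odd_square_eq_tri[of b] by linarith
    then show "y \<in> odd_square_pairs (int n)" using y by (auto simp: odd_square_pairs_def)
  qed
  moreover have "inj_on ?f (tri_pairs 4 (n - 1))" by (auto simp: inj_on_def)
  ultimately show ?thesis by (simp add: card_image)
qed

lemma rhs_nth:
  "fps_nth (fps_X * qpinf 8 ^ 4 / qpinf 4 ^ 2) n = of_nat (card (odd_square_pairs (int n)))"
proof -
  have rhs: "fps_X * qpinf 8 ^ 4 / qpinf 4 ^ 2 = fps_X * psi_fps 4 ^ 2"
    using qpinf_power_4_divide[of 4] qpinf_nth_0[of 4]
    by (simp add: fps_divide_unit power2_eq_square fps_mult_nth_0 mult.assoc)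
  show ?thesis
  proof (cases n)
    case 0
    then have "odd_square_pairs (int n) = {}" using odd_square_pairs_nonempty by fastforce
    then show ?thesis using 0 by (simp add: rhs fps_X_mult_nth)
  next
    case (Suc k)
    then show ?thesis using card_tri_pairs[of n] by (simp add: rhs fps_X_mult_nth psi_fps_square_nth)
  qed
qed

section \<open>The odd part of $A(q)$ modulo 4\<close>

lemma Aterm_head_nth_odd:
  assumes n: "odd n" and k: "0 < k"
  shows "fps_nth (Aterm_head k) n = (if k dvd n then (-1) ^ (n div k div 2) else 0)"
proof (cases "k dvd n")
  case True
  then obtain q where q: "n = k * q" by blast
  with n have "odd q" by simp
  then obtain r where "q = 2 * r + 1" by (blast elim: oddE)
  with q have r: "n = k * (2 * r + 1)" by simp
  then have "n - k = (2 * k) * r" by (simp add: algebra_simps)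
  then show ?thesis using r k by (simp add: Aterm_head_nth[OF k])
next
  case False
  have "\<not> (2 * k) dvd (n - k)" if "k \<le> n"
  proof
    assume "(2 * k) dvd (n - k)"
    then have "k dvd (n - k)" by (rule dvd_mult_right)
    then have "k dvd (n - k + k)" by simp
    then show False using False that by simp
  qed
  then show ?thesis using False by (simp add: Aterm_head_nth[OF k])
qed

lemma neg_one_power_half_cong:
  assumes "odd q"
  shows "[(-1) ^ (q div 2) = int q] (mod 4)"
proof -
  obtain r where r: "q = 2 * r + 1" using assms oddE by blast
  show ?thesis
  proof (cases "even r")
    case True
    then obtain s where "r = 2 * s" by blast
    then show ?thesis using r by (simp add: cong_iff_dvd_diff power_mult)
  next
    case False
    then obtain s where "r = 2 * s + 1" using oddE by blast
    then have "(-1::int) ^ (q div 2) - int q = 4 * (- int s - 1)" using r by (simp add: power_mult)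
    then show ?thesis unfolding cong_iff_dvd_diff by simp
  qed
qed

lemma sum_codivisors:
  assumes n: "0 < n"
  shows "(\<Sum>k | k \<in> {1..n} \<and> k dvd n. int (n div k)) = divisor_sum (int n)"
proof -
  have "(\<Sum>k | k \<in> {1..n} \<and> k dvd n. int (n div k))
      = (\<Sum>d | d \<in> {1..n} \<and> d dvd n. int d)"
    by (rule sum.reindex_bij_witness[where i="\<lambda>d. n div d" and j="\<lambda>d. n div d"])
       (use n in \<open>auto elim!: dvdE simp: dvd_div_iff_mult\<close>)
  also have "\<dots> = divisor_sum (int n)"
    unfolding divisor_sum_def
  proof (rule sum.reindex_bij_witness[where i=nat and j=int])
    fix a assume a: "a \<in> {d. 0 < d \<and> d dvd int n}"
    then have "nat a dvd n" by (simp add: nat_dvd_iff)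
    moreover have "a \<le> int n" using a n by (simp add: zdvd_imp_le)
    ultimately show "nat a \<in> {d. d \<in> {1..n} \<and> d dvd n}" using a by auto
  qed auto
  finally show ?thesis .
qed

text \<open>The $k$-th head $q^k/(1 + q^{2k})$ contributes $(-1)^r$ exactly when $n = k(2r + 1)$,
  and $(-1)^r \equiv 2r + 1 \pmod 4$.\<close>

lemma sum_Aterm_head_nth_cong:
  assumes n: "odd n"
  shows "\<exists>c. (\<Sum>k\<in>{1..n}. fps_nth (Aterm_head k) n) = of_int c
             \<and> [c = divisor_sum (int n)] (mod 4)"
proof -
  let ?c = "\<Sum>k | k \<in> {1..n} \<and> k dvd n. (-1::int) ^ (n div k div 2)"
  have "(\<Sum>k\<in>{1..n}. fps_nth (Aterm_head k) n)
      = (\<Sum>k\<in>{1..n}. if k dvd n then (-1) ^ (n div k div 2) else 0)"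
    using n by (intro sum.cong refl) (simp add: Aterm_head_nth_odd)
  also have "\<dots> = of_int ?c" by (simp add: sum.inter_filter[symmetric] Int_def)
  finally have head: "(\<Sum>k\<in>{1..n}. fps_nth (Aterm_head k) n) = of_int ?c" .
  have "[?c = (\<Sum>k | k \<in> {1..n} \<and> k dvd n. int (n div k))] (mod 4)"
  proof (rule cong_sum)
    fix k assume "k \<in> {k. k \<in> {1..n} \<and> k dvd n}"
    then have "n = k * (n div k)" by simp
    then have "odd (n div k)" using n by (metis even_mult_iff)
    then show "[(-1) ^ (n div k div 2) = int (n div k)] (mod 4)" by (rule neg_one_power_half_cong)
  qed
  also have "(\<Sum>k | k \<in> {1..n} \<and> k dvd n. int (n div k)) = divisor_sum (int n)"
    by (rule sum_codivisors[OF odd_pos[OF n]])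
  finally show ?thesis using head by blast
qed

lemma even_sum_Aterm_tail_nth:
  assumes n: "odd n"
  shows "(\<Sum>k\<in>{1..n}. fps_nth (Aterm_tail k) n) / 2 \<in> \<int>"
proof -
  let ?V = "\<Sum>k\<in>{1..n}. fps_nth (Aterm_tail k) n"
    and ?S = "\<Sum>k\<in>{1..n}. fps_nth (Aterm_tail_mod_2 k) n"
  have "(?V - ?S) / 2 = (\<Sum>k\<in>{1..n}. fps_nth (Aterm_tail k - Aterm_tail_mod_2 k) n / 2)"
    by (simp add: sum_divide_distrib[symmetric] sum_subtractf)
  also have "\<dots> \<in> \<int>"
    by (rule Ints_sum) (use fps_cong2_Aterm_tail in \<open>auto simp: fps_cong2_def fps_even_def\<close>)
  finally have A: "(?V - ?S) / 2 \<in> \<int>" .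
  have "?S = of_nat (card (quad_reps (int n)))"
    by (simp only: sum_Aterm_tail_mod_2_nth card_split_triples card_quad_reps_nat)
  moreover have "even (card (quad_reps (int n)))" by (rule even_card_quad_reps) (use n in simp)
  ultimately have B: "?S / 2 \<in> \<int>" by (auto elim!: evenE)
  have "?V / 2 = (?V - ?S) / 2 + ?S / 2" by (simp add: add_divide_distrib[symmetric])
  then show ?thesis using Ints_add[OF A B] by (simp only:)
qed

lemma Aser_nth_cong_divisor_sum:
  assumes n: "odd n"
  shows "\<exists>c. fps_nth Aser n = of_int c \<and> [c = divisor_sum (int n)] (mod 4)"
proof -
  obtain c where c: "(\<Sum>k\<in>{1..n}. fps_nth (Aterm_head k) n) = of_int c"
                    "[c = divisor_sum (int n)] (mod 4)"
    using sum_Aterm_head_nth_cong[OF n] by blast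
  obtain w where w: "(\<Sum>k\<in>{1..n}. fps_nth (Aterm_tail k) n) / 2 = of_int w"
    using even_sum_Aterm_tail_nth[OF n] by (auto elim!: Ints_cases)
  have "fps_nth Aser n = (\<Sum>k\<in>{1..n}. fps_nth (Aterm k) n)" by (simp add: Aser_def)
  also have "\<dots> = (\<Sum>k\<in>{1..n}. fps_nth (Aterm_head k) n - 2 * fps_nth (Aterm_tail k) n)"
    by (intro sum.cong refl) (simp add: Aterm_decomp numeral_fps_const fps_mult_left_const_nth)
  also have "\<dots> = of_int (c - 4 * w)"
    using c(1) w by (simp add: sum_subtractf sum_distrib_left[symmetric])
  finally have "fps_nth Aser n = of_int (c - 4 * w)" .
  moreover have "[c - 4 * w = c] (mod 4)" by (simp add: cong_iff_dvd_diff)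
  ultimately show ?thesis using c(2) cong_trans by blast
qed

lemma fps_nth_divide_2: "fps_nth (f / 2 :: rat fps) n = fps_nth f n / 2"
proof -
  have "inverse (2 :: rat fps) = fps_const (1/2)"
    by (rule fps_inverse_unique)
       (simp only: numeral_fps_const[of "num.Bit0 num.One"] fps_const_mult, simp)
  then show ?thesis by (simp add: fps_divide_unit fps_mult_right_const_nth)
qed

lemma odd_part_nth:
  "fps_nth ((Aser - (Aser oo (- fps_X))) / 2) n = (if odd n then fps_nth Aser n else 0)"
  by (simp add: fps_nth_divide_2 fps_compose_uminus')

theorem lemma4p3:
  shows "\<forall>n. \<exists>c d :: int.
     fps_nth ((Aser - (Aser oo (- fps_X))) / 2) n = of_int c \<and>
     fps_nth (fps_X * qpinf 8 ^ 4 / qpinf 4 ^ 2) n = of_int d \<and>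
     [c = d] (mod 4)"
proof
  fix n :: nat
  let ?d = "int (card (odd_square_pairs (int n)))"
  show "\<exists>c d :: int.
     fps_nth ((Aser - (Aser oo (- fps_X))) / 2) n = of_int c \<and>
     fps_nth (fps_X * qpinf 8 ^ 4 / qpinf 4 ^ 2) n = of_int d \<and>
     [c = d] (mod 4)"
  proof (cases "odd n")
    case True
    obtain c where c: "fps_nth Aser n = of_int c" "[c = divisor_sum (int n)] (mod 4)"
      using Aser_nth_cong_divisor_sum[OF True] by blast
    have "[?d = divisor_sum (int n)] (mod 4)"
      by (rule card_odd_square_pairs_cong_divisor_sum) (use True in \<open>simp_all add: odd_pos\<close>)
    then have "[c = ?d] (mod 4)" using cong_trans[OF c(2) cong_sym] by blast
    moreover have "fps_nth ((Aser - (Aser oo (- fps_X))) / 2) n = of_int c"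
      unfolding odd_part_nth using True c(1) by simp
    moreover have "fps_nth (fps_X * qpinf 8 ^ 4 / qpinf 4 ^ 2) n = of_int ?d" by (simp add: rhs_nth)
    ultimately show ?thesis by blast
  next
    case False
    have "odd_square_pairs (int n) = {}"
    proof (rule ccontr)
      assume "odd_square_pairs (int n) \<noteq> {}"
      then have "int n mod 4 = 1" by (rule odd_square_pairs_nonempty)
      then show False using False by presburger
    qed
    then show ?thesis unfolding odd_part_nth rhs_nth using False by simp
  qed
qed

end
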